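(* Assume (H1)–(H4) and the data and construction below (with $d_1,b,M,d_2$ admissible). Then for every $z\in\mathbb R^N$ and $t_2>t_1>0$: (1) $u(t_2+t,x;u^-_{0,z,t_2},z)\ge u(t_1+t,x;u^-_{0,z,t_1},z)$ for all $t>-t_1$, $x\in\mathbb R^N$; (2) $u(t_2+t,x;u^+_{0,z,t_2},z)\le u(t_1+t,x;u^+_{0,z,t_1},z)$ for all $t>-t_1$, $x\in\mathbb R^N$.
   Context: Setting: $N\ge1$, $S^{N-1}$ unit sphere, $e_i$ standard basis vectors. $k\in C^1(\mathbb R^N)$, $k(z)>0$ for $\|z\|<\delta_0$, $k(z)=0$ for $\|z\|\ge\delta_0$ (some $\delta_0>0$), $\int k=1$. $f:\mathbb R^N\times\mathbb R\to\mathbb R$ with $f(x+p_ie_i,u)=f(x,u)$ for given periods $p_i>0$. $(E_z)$: $\partial_tu=\int_{\mathbb R^N}k(y-x)u(t,y)dy-u(t,x)+u(t,x)f(x+z,u(t,x))$; for bounded measurable $u_0$, $u(t,x;u_0,z)$ is the solution of $(E_z)$ with $u(0,\cdot)=u_0$. $X_p$: continuous $p$-periodic functions with sup norm, $X_p^+$ nonnegative ones; $a_0(x)=f(x,0)$; $(\mathcal K_{\xi,\mu}v)(x)=\int e^{-\mu(y-x)\cdot\xi}k(y-x)v(y)dy$, $\mathcal K=\mathcal K_{\xi,0}$; $\lambda_0(\xi,\mu,a_0)=\sup\{\mathrm{Re}\lambda:\lambda\in\sigma(\mathcal K_{\xi,\mu}-I+a_0I)\}$ on $X_p$; $\lambda_0=\lambda_0(\xi,0,a_0)$.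 Principal eigenvalue: algebraically simple eigenvalue with eigenfunction in $X_p^+$, rest of spectrum has smaller real part. (H1) $f\in C^1(\mathbb R^N\times[0,\infty))$, $\sup_{x,u\ge0}\partial_uf<0$, $f(x,u)<0$ for $u$ large. (H2) $\lambda_0>0$. (H3) for all $\xi\in S^{N-1}$, $\mu\ge0$, $\lambda_0(\xi,\mu,a_0)$ is the principal eigenvalue of $\mathcal K_{\xi,\mu}-I+a_0I$. (H4) $f(x,u)=f(x,0)$ for $u\le0$. Known: $(E_0)$ has a unique stationary solution $u^+\in X_p^+\setminus\{0\}$; for each $\xi$ there is $\mu^*(\xi)>0$ with $c^*(\xi):=\inf_{\mu>0}\lambda_0(\xi,\mu,a_0)/\mu=\lambda_0(\xi,\mu^*(\xi),a_0)/\mu^*(\xi)<\lambda_0(\xi,\mu,a_0)/\mu$ for $\mu\in(0,\mu^*(\xi))$. Data: fix $\xi\in S^{N-1}$, $c>c^*(\xi)$, $\mu\in(0,\mu^*(\xi))$ with $\lambda_0(\xi,\mu,a_0)=c\mu$, and $\mu_1\in(\mu,\min\{2\mu,\mu^*(\xi)\})$ with $c^*(\xi)<\lambda_0(\xi,\mu_1,a_0)/\mu_1<c$. $\phi,\phi_1,\phi_0\in X_p^+$ positive principal eigenfunctions of $\mathcal K_{\xi,\mu}-I+a_0I$, $\mathcal K_{\xi,\mu_1}-I+a_0I$, $\mathcal K-I+a_0I$, each with sup $1$. Construction: for $d_1>0$, $z$, $T$, put $w_{z,T}(x)=e^{-\mu(x\cdot\xi+cT)}\phi(x+z)-d_1e^{-\mu_1(x\cdot\xi+cT)}\phi_1(x+z)$.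 Admissibility: $d_1$ is large enough that $(t,x)\mapsto w_{z,T-t}(x)$ satisfies the sub-solution inequality $\partial_tv\le\int k(y-x)v(t,y)dy-v+f(x+z,v)v$ pointwise for all $z,T$; $b>0$ is small enough that $b\phi_0(\cdot+z)$ satisfies $\int k(y-x)b\phi_0(y+z)dy-b\phi_0(x+z)+f(x+z,b\phi_0(x+z))b\phi_0(x+z)\ge0$ for all $x,z$; $M>0$ is such that $w_{z,T}(x)\ge b$ whenever $M-2\delta_0\le x\cdot\xi+cT\le M$; $d_2\ge0$. Define $u^-_{0,z,T}(x)=\max\{b\phi_0(x+z),w_{z,T}(x)\}$ if $x\cdot\xi+cT<M$ and $u^-_{0,z,T}(x)=w_{z,T}(x)$ if $x\cdot\xi+cT\ge M$; and $u^+_{0,z,T}(x)=\min\{e^{-\mu(x\cdot\xi+cT)}\phi(x+z)+d_2e^{-\mu_1(x\cdot\xi+cT)}\phi_1(x+z),\ u^+(x+z)\}$. *)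

theory Defs
  imports "HOL-Analysis.Analysis"
begin

text \<open>Periods are given by p :: 'n => real, the standard
  basis vector e_i is axis i 1.  Xp is the complex space X_p (complexified, for
  spectral purposes), Xp_real the real continuous p-periodic functions.\<close>

definition Xp :: "('n::finite \<Rightarrow> real) \<Rightarrow> (real^'n \<Rightarrow> complex) set" where
  "Xp p = {v. continuous_on UNIV v \<and> (\<forall>x i. v (x + p i *\<^sub>R axis i 1) = v x)}"

definition Xp_real :: "('n::finite \<Rightarrow> real) \<Rightarrow> (real^'n \<Rightarrow> real) set" where
  "Xp_real p = {v. continuous_on UNIV v \<and> (\<forall>x i. v (x + p i *\<^sub>R axis i 1) = v x)}"

definition Kop :: "(real^'n::finite \<Rightarrow> real) \<Rightarrow> real^'n \<Rightarrow> real
                     \<Rightarrow> (real^'n \<Rightarrow> complex) \<Rightarrow> real^'n \<Rightarrow> complex" where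
  "Kop k xi mu v x =
     (LINT y|lborel. complex_of_real (exp (- mu * ((y - x) \<bullet> xi)) * k (y - x)) * v y)"

definition Lop :: "(real^'n::finite \<Rightarrow> real) \<Rightarrow> real^'n \<Rightarrow> real \<Rightarrow> (real^'n \<Rightarrow> real)
                     \<Rightarrow> (real^'n \<Rightarrow> complex) \<Rightarrow> real^'n \<Rightarrow> complex" where
  "Lop k xi mu a0 v x = Kop k xi mu v x - v x + complex_of_real (a0 x) * v x"

text \<open>Spectrum of an operator A on X_p: lambda such that lambda I - A is not a bijection
  of X_p (for bounded operators this is equivalent to non-invertibility by the
  open mapping theorem).\<close>
definition spec_Xp :: "('n::finite \<Rightarrow> real) \<Rightarrow> ((real^'n \<Rightarrow> complex) \<Rightarrow> real^'n \<Rightarrow> complex)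
                        \<Rightarrow> complex set" where
  "spec_Xp p A = {lam. \<not> bij_betw (\<lambda>v x. lam * v x - A v x) (Xp p) (Xp p)}"

definition lambda0 :: "('n::finite \<Rightarrow> real) \<Rightarrow> (real^'n \<Rightarrow> real) \<Rightarrow> real^'n \<Rightarrow> real
                         \<Rightarrow> (real^'n \<Rightarrow> real) \<Rightarrow> real" where
  "lambda0 p k xi mu a0 = Sup (Re ` spec_Xp p (Lop k xi mu a0))"

text \<open>Principal eigenvalue: algebraically simple eigenvalue with an eigenfunction in
  X_p^+, the rest of the spectrum having smaller real part.\<close>
definition principal_eigenvalue :: "('n::finite \<Rightarrow> real)
      \<Rightarrow> ((real^'n \<Rightarrow> complex) \<Rightarrow> real^'n \<Rightarrow> complex) \<Rightarrow> real \<Rightarrow> bool" where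
  "principal_eigenvalue p A lam \<longleftrightarrow>
     (\<exists>phi \<in> Xp_real p. (\<forall>x. phi x \<ge> 0) \<and> (\<exists>x. phi x \<noteq> 0) \<and>
        A (\<lambda>x. complex_of_real (phi x)) = (\<lambda>x. complex_of_real lam * complex_of_real (phi x))) \<and>
     (\<exists>w \<in> Xp p. w \<noteq> (\<lambda>x. 0) \<and>
        {v \<in> Xp p. \<exists>n. ((\<lambda>u x. complex_of_real lam * u x - A u x) ^^ n) v = (\<lambda>x. 0)}
          = {(\<lambda>x. c * w x) | c. True}) \<and>
     (\<forall>nu \<in> spec_Xp p A. nu \<noteq> complex_of_real lam \<longrightarrow> Re nu < lam)"

definition is_solution :: "(real^'n::finite \<Rightarrow> real) \<Rightarrow> (real^'n \<Rightarrow> real \<Rightarrow> real) \<Rightarrow> real^'n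
      \<Rightarrow> (real^'n \<Rightarrow> real) \<Rightarrow> (real \<Rightarrow> real^'n \<Rightarrow> real) \<Rightarrow> bool" where
  "is_solution k f z u0 u \<longleftrightarrow>
     (\<forall>x. u 0 x = u0 x) \<and>
     (\<forall>t\<ge>0. u t \<in> borel_measurable lborel) \<and>
     (\<forall>T\<ge>0. \<exists>B. \<forall>t\<in>{0..T}. \<forall>x. \<bar>u t x\<bar> \<le> B) \<and>
     (\<forall>t\<ge>0. \<forall>x. ((\<lambda>s. u s x) has_real_derivative
          ((LINT y|lborel. k (y - x) * u t y) - u t x + u t x * f (x + z) (u t x)))
          (at t within {0..}))"

definition wfun :: "real^'n::finite \<Rightarrow> real \<Rightarrow> real \<Rightarrow> real \<Rightarrow> real
      \<Rightarrow> (real^'n \<Rightarrow> real) \<Rightarrow> (real^'n \<Rightarrow> real) \<Rightarrow> real^'n \<Rightarrow> real \<Rightarrow> real^'n \<Rightarrow> real" where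
  "wfun xi c mu mu1 d1 phi phi1 z T x =
     exp (- mu * (x \<bullet> xi + c * T)) * phi (x + z)
     - d1 * exp (- mu1 * (x \<bullet> xi + c * T)) * phi1 (x + z)"

text \<open>u^-_{0,z,T}; the argument w is meant to be w_{.,.} (as a function of z, T, x)\<close>
definition uminus0 :: "real^'n::finite \<Rightarrow> real \<Rightarrow> real \<Rightarrow> real \<Rightarrow> (real^'n \<Rightarrow> real)
      \<Rightarrow> (real^'n \<Rightarrow> real \<Rightarrow> real^'n \<Rightarrow> real) \<Rightarrow> real^'n \<Rightarrow> real \<Rightarrow> real^'n \<Rightarrow> real" where
  "uminus0 xi c M b phi0 w z T x =
     (if x \<bullet> xi + c * T < M then max (b * phi0 (x + z)) (w z T x) else w z T x)"

definition uplus0 :: "real^'n::finite \<Rightarrow> real \<Rightarrow> real \<Rightarrow> real \<Rightarrow> real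
      \<Rightarrow> (real^'n \<Rightarrow> real) \<Rightarrow> (real^'n \<Rightarrow> real) \<Rightarrow> (real^'n \<Rightarrow> real)
      \<Rightarrow> real^'n \<Rightarrow> real \<Rightarrow> real^'n \<Rightarrow> real" where
  "uplus0 xi c mu mu1 d2 phi phi1 up z T x =
     min (exp (- mu * (x \<bullet> xi + c * T)) * phi (x + z)
          + d2 * exp (- mu1 * (x \<bullet> xi + c * T)) * phi1 (x + z))
         (up (x + z))"

end

theory Submission
  imports Defs
begin

(* The whole argument is a comparison principle.  Since solutions are only known to be
   differentiable in t for each fixed x, the comparison is proved for functions whose
   upper right Dini derivative is controlled ("dini_le"); this covers max/min of smooth
   branches such as u^-_{0,z,T} and u^+_{0,z,T}. *)

section \<open>Upper right Dini derivatives\<close>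

text \<open>dini_le h t K: the upper right Dini derivative of h at t is at most K.\<close>

definition dini_le :: "(real \<Rightarrow> real) \<Rightarrow> real \<Rightarrow> real \<Rightarrow> bool" where
  "dini_le h t K \<longleftrightarrow> (\<forall>e>0. \<exists>d>0. \<forall>s. t < s \<and> s < t + d \<longrightarrow> h s \<le> h t + (K + e) * (s - t))"

lemma dini_le_deriv:
  assumes "(h has_real_derivative D) (at t within {t..})"
  shows "dini_le h t D"
  unfolding dini_le_def
proof (intro allI impI)
  fix e :: real assume e: "e > 0"
  from assms have "((\<lambda>y. (h y - h t) / (y - t)) \<longlongrightarrow> D) (at t within {t..})"
    by (simp add: has_field_derivative_iff)
  then have "eventually (\<lambda>y. dist ((h y - h t) / (y - t)) D < e) (at t within {t..})"
    using e by (rule tendstoD)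
  then obtain d where d: "d > 0" and hd: "\<forall>y\<in>{t..}. y \<noteq> t \<and> dist y t < d \<longrightarrow>
      dist ((h y - h t) / (y - t)) D < e"
    unfolding eventually_at by (elim exE conjE) (rule that)
  show "\<exists>d>0. \<forall>s. t < s \<and> s < t + d \<longrightarrow> h s \<le> h t + (D + e) * (s - t)"
  proof (intro exI[of _ d] conjI allI impI d)
    fix s assume s: "t < s \<and> s < t + d"
    have "s \<in> {t..}" "s \<noteq> t" "dist s t < d" using s by (auto simp: dist_real_def)
    then have "dist ((h s - h t) / (s - t)) D < e" using hd by blast
    then have "(h s - h t) / (s - t) \<le> D + e" by (auto simp: dist_real_def)
    then show "h s \<le> h t + (D + e) * (s - t)" using s by (simp add: divide_le_eq algebra_simps)
  qed
qed

lemma dini_le_mono: "dini_le h t K \<Longrightarrow> K \<le> K' \<Longrightarrow> dini_le h t K'"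
  unfolding dini_le_def
proof (intro allI impI)
  fix e :: real assume a: "\<forall>e>0. \<exists>d>0. \<forall>s. t < s \<and> s < t + d \<longrightarrow> h s \<le> h t + (K + e) * (s - t)"
    and K: "K \<le> K'" and e: "e > 0"
  then obtain d where "d > 0" "\<forall>s. t < s \<and> s < t + d \<longrightarrow> h s \<le> h t + (K + e) * (s - t)" by blast
  moreover have "\<forall>s. t < s \<longrightarrow> (K + e) * (s - t) \<le> (K' + e) * (s - t)"
    using K by (intro allI impI mult_right_mono) auto
  ultimately show "\<exists>d>0. \<forall>s. t < s \<and> s < t + d \<longrightarrow> h s \<le> h t + (K' + e) * (s - t)"
    by (meson order_trans add_left_mono)
qed

lemma dini_le_add:
  assumes "dini_le h1 t K1" "dini_le h2 t K2"
  shows "dini_le (\<lambda>s. h1 s + h2 s) t (K1 + K2)"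
  unfolding dini_le_def
proof (intro allI impI)
  fix e :: real assume e: "e > 0"
  obtain d1 where d1: "d1 > 0" "\<forall>s. t < s \<and> s < t + d1 \<longrightarrow> h1 s \<le> h1 t + (K1 + e/2) * (s - t)"
    using assms(1) e unfolding dini_le_def by (meson half_gt_zero)
  obtain d2 where d2: "d2 > 0" "\<forall>s. t < s \<and> s < t + d2 \<longrightarrow> h2 s \<le> h2 t + (K2 + e/2) * (s - t)"
    using assms(2) e unfolding dini_le_def by (meson half_gt_zero)
  show "\<exists>d>0. \<forall>s. t < s \<and> s < t + d \<longrightarrow> h1 s + h2 s \<le> h1 t + h2 t + (K1 + K2 + e) * (s - t)"
  proof (intro exI[of _ "min d1 d2"] conjI allI impI)
    show "min d1 d2 > 0" using d1 d2 by simp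
    fix s assume s: "t < s \<and> s < t + min d1 d2"
    then have "h1 s \<le> h1 t + (K1 + e/2) * (s - t)" "h2 s \<le> h2 t + (K2 + e/2) * (s - t)"
      using d1 d2 by auto
    moreover have "(K1 + K2 + e) * (s - t) = (K1 + e/2)*(s-t) + (K2 + e/2)*(s-t)" by (simp add: algebra_simps)
    ultimately show "h1 s + h2 s \<le> h1 t + h2 t + (K1 + K2 + e) * (s - t)"
      by linarith
  qed
qed

lemma dini_le_cong:
  assumes "dini_le h t K" "d > 0" "\<And>s. t \<le> s \<Longrightarrow> s < t + d \<Longrightarrow> g s = h s"
  shows "dini_le g t K"
  unfolding dini_le_def
proof (intro allI impI)
  fix e :: real assume e: "e > 0"
  obtain d1 where d1: "d1 > 0" "\<forall>s. t < s \<and> s < t + d1 \<longrightarrow> h s \<le> h t + (K + e) * (s - t)"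
    using assms(1) e unfolding dini_le_def by blast
  show "\<exists>d>0. \<forall>s. t < s \<and> s < t + d \<longrightarrow> g s \<le> g t + (K + e) * (s - t)"
  proof (intro exI[of _ "min d d1"] conjI allI impI)
    show "min d d1 > 0" using d1 assms(2) by simp
    fix s assume s: "t < s \<and> s < t + min d d1"
    then have "g s = h s" "g t = h t" using assms(2,3) by auto
    then show "g s \<le> g t + (K + e) * (s - t)" using d1 s by auto
  qed
qed

lemma dini_le_const: "K \<ge> 0 \<Longrightarrow> dini_le (\<lambda>s. a) t K"
  unfolding dini_le_def by (auto intro!: exI[of _ 1])

text \<open>At a point where h1 strictly dominates h2, max h1 h2 coincides with h1 near t.\<close>

lemma dini_le_max_dominant:
  assumes h1: "dini_le h1 t K" and gt: "h1 t > h2 t"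
    and c1: "continuous (at t) h1" and c2: "continuous (at t) h2"
  shows "dini_le (\<lambda>s. max (h1 s) (h2 s)) t K"
proof -
  have "continuous (at t) (\<lambda>s. h1 s - h2 s)" using c1 c2 by (intro continuous_intros)
  then have "eventually (\<lambda>s. h1 s - h2 s > 0) (at t)"
    using gt unfolding isCont_def by (intro order_tendstoD(1)) auto
  then obtain d where d: "d > 0" "\<And>s. s \<noteq> t \<Longrightarrow> dist s t < d \<Longrightarrow> h1 s - h2 s > 0"
    unfolding eventually_at by auto
  show ?thesis
  proof (rule dini_le_cong[OF h1 d(1)])
    fix s assume "t \<le> s" "s < t + d"
    then show "max (h1 s) (h2 s) = h1 s"
      by (cases "s = t") (use gt d(2)[of s] in \<open>auto simp: dist_real_def\<close>)
  qed
qed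

lemma dini_le_max:
  assumes "h1 t \<ge> h2 t \<Longrightarrow> dini_le h1 t K" "h2 t \<ge> h1 t \<Longrightarrow> dini_le h2 t K"
    and c1: "continuous (at t) h1" and c2: "continuous (at t) h2"
  shows "dini_le (\<lambda>s. max (h1 s) (h2 s)) t K"
proof -
  consider "h1 t = h2 t" | "h1 t > h2 t" | "h2 t > h1 t" by linarith
  then show ?thesis
  proof cases
    case 1
    show ?thesis unfolding dini_le_def
    proof (intro allI impI)
      fix e :: real assume e: "e > 0"
      obtain d1 where d1: "d1 > 0" "\<forall>s. t < s \<and> s < t + d1 \<longrightarrow> h1 s \<le> h1 t + (K + e) * (s - t)"
        using assms(1) 1 e unfolding dini_le_def by auto
      obtain d2 where d2: "d2 > 0" "\<forall>s. t < s \<and> s < t + d2 \<longrightarrow> h2 s \<le> h2 t + (K + e) * (s - t)"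
        using assms(2) 1 e unfolding dini_le_def by auto
      show "\<exists>d>0. \<forall>s. t < s \<and> s < t + d \<longrightarrow> max (h1 s) (h2 s) \<le> max (h1 t) (h2 t) + (K + e) * (s - t)"
        using d1 d2 1 by (intro exI[of _ "min d1 d2"]) auto
    qed
  next
    case 2
    then show ?thesis using assms by (intro dini_le_max_dominant) auto
  next
    case 3
    then have "dini_le (\<lambda>s. max (h2 s) (h1 s)) t K"
      using assms by (intro dini_le_max_dominant) auto
    then show ?thesis by (simp add: max.commute)
  qed
qed

lemma first_crossing:
  fixes \<phi> :: "real \<Rightarrow> real"
  assumes ab: "a \<le> b" and cont: "continuous_on {a..b} \<phi>" and neg: "\<phi> a < 0" and pos: "\<phi> b > 0"
  obtains s where "a < s" "s < b" "\<phi> s = 0" "\<And>d. d > 0 \<Longrightarrow> \<exists>r. s < r \<and> r < s + d \<and> \<phi> r > 0"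
proof -
  define Z where "Z = {r \<in> {a..b}. \<phi> r > 0}"
  have bZ: "b \<in> Z" and Zbdd: "bdd_below Z" using pos ab by (auto simp: Z_def intro: bdd_belowI[of _ a])
  define s where "s = Inf Z"
  have sZ: "s \<le> r" if "r \<in> Z" for r unfolding s_def using that Zbdd by (rule cInf_lower)
  have as: "a \<le> s" unfolding s_def using bZ by (intro cInf_greatest) (auto simp: Z_def)
  have sb: "s \<le> b" using sZ[OF bZ] .
  have approach: "\<exists>r\<in>Z. r < s + d" if "d > 0" for d
    using cInf_less_iff[of Z "s + d"] bZ Zbdd that unfolding s_def by auto
  have near: "\<exists>dl>0. \<forall>r\<in>{a..b}. dist r s < dl \<longrightarrow> dist (\<phi> r) (\<phi> s) < \<bar>\<phi> s\<bar>" if "\<phi> s \<noteq> 0"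
    using cont as sb that unfolding continuous_on_iff by (meson atLeastAtMost_iff zero_less_abs_iff)
  have "\<not> \<phi> s > 0"
  proof
    assume ps: "\<phi> s > 0"
    then have "s \<noteq> a" using neg by auto
    obtain dl where dl: "dl > 0" "\<forall>r\<in>{a..b}. dist r s < dl \<longrightarrow> dist (\<phi> r) (\<phi> s) < \<bar>\<phi> s\<bar>"
      using near ps by auto
    define r where "r = max a (s - dl / 2)"
    have r: "r \<in> {a..b}" "dist r s < dl" "r < s" using dl as sb \<open>s \<noteq> a\<close> by (auto simp: r_def dist_real_def)
    then have "dist (\<phi> r) (\<phi> s) < \<phi> s" using dl(2) ps by auto
    then have "\<phi> r > 0" by (auto simp: dist_real_def)
    then show False using sZ[of r] r by (auto simp: Z_def)
  qed
  moreover have "\<not> \<phi> s < 0"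
  proof
    assume ns: "\<phi> s < 0"
    obtain dl where dl: "dl > 0" "\<forall>r\<in>{a..b}. dist r s < dl \<longrightarrow> dist (\<phi> r) (\<phi> s) < \<bar>\<phi> s\<bar>"
      using near ns by auto
    obtain r where "r \<in> Z" "r < s + dl" using approach dl(1) by blast
    moreover have "s \<le> r" using sZ \<open>r \<in> Z\<close> .
    ultimately have "r \<in> {a..b}" "dist r s < dl" "\<phi> r > 0" by (auto simp: Z_def dist_real_def)
    then have "\<bar>\<phi> r - \<phi> s\<bar> < - \<phi> s" using dl(2) ns by (auto simp: dist_real_def)
    then show False using \<open>\<phi> r > 0\<close> by linarith
  qed
  ultimately have zero: "\<phi> s = 0" by simp
  show ?thesis
  proof (rule that)
    show "\<phi> s = 0" by (rule zero)
    show "a < s" using as zero neg by (cases "s = a") auto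
    show "s < b" using sb zero pos by (cases "s = b") auto
    fix d :: real assume "d > 0"
    then obtain r where "r \<in> Z" "r < s + d" using approach by blast
    moreover have "r \<noteq> s" using \<open>r \<in> Z\<close> zero by (auto simp: Z_def)
    moreover have "s \<le> r" using sZ \<open>r \<in> Z\<close> .
    ultimately show "\<exists>r. s < r \<and> r < s + d \<and> \<phi> r > 0" by (intro exI[of _ r]) (auto simp: Z_def)
  qed
qed

text \<open>At the first crossing of this line, h would be positive and grow faster than K + e.\<close>

lemma dini_growth_eps:
  fixes h :: "real \<Rightarrow> real"
  assumes ab: "a \<le> b" and ha: "h a \<le> 0" and hc: "continuous_on {a..b} h" and K: "K \<ge> 0"
    and hd: "\<And>t. a \<le> t \<Longrightarrow> t < b \<Longrightarrow> h t > 0 \<Longrightarrow> dini_le h t K"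
    and e: "e > 0"
  shows "h b \<le> (K + e) * (b - a) + e"
proof (rule ccontr)
  define g where "g r = (K + e) * (r - a) + e" for r
  assume "\<not> h b \<le> (K + e) * (b - a) + e"
  then have pos: "(\<lambda>r. h r - g r) b > 0" by (simp add: g_def)
  have neg: "(\<lambda>r. h r - g r) a < 0" using ha e by (simp add: g_def)
  have cont: "continuous_on {a..b} (\<lambda>r. h r - g r)" unfolding g_def
    by (intro continuous_intros hc)
  obtain s where s: "a < s" "s < b" "h s = g s"
    and above: "\<And>d. d > 0 \<Longrightarrow> \<exists>r. s < r \<and> r < s + d \<and> h r - g r > 0"
    by (rule first_crossing[OF ab cont neg pos]) auto
  have "(K + e) * (s - a) \<ge> 0" using s(1) K e by simp
  then have "h s > 0" using s(3) e by (simp add: g_def)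
  then have "dini_le h s K" using hd s(1,2) by simp
  then obtain d where "d > 0" and d: "\<forall>r. s < r \<and> r < s + d \<longrightarrow> h r \<le> h s + (K + e) * (r - s)"
    using e unfolding dini_le_def by blast
  obtain r where r: "s < r" "r < s + d" "h r - g r > 0" using above[OF \<open>d > 0\<close>] by blast
  have "h r \<le> h s + (K + e) * (r - s)" using d r(1,2) by blast
  also have "\<dots> = g r" using s(3) by (simp add: g_def algebra_simps)
  finally show False using r(3) by simp
qed

lemma dini_growth:
  fixes h :: "real \<Rightarrow> real"
  assumes ab: "a \<le> b" and ha: "h a \<le> 0" and hc: "continuous_on {a..b} h" and K: "K \<ge> 0"
    and hd: "\<And>t. a \<le> t \<Longrightarrow> t < b \<Longrightarrow> h t > 0 \<Longrightarrow> dini_le h t K"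
  shows "h b \<le> K * (b - a)"
proof (rule field_le_epsilon)
  fix e :: real assume e: "e > 0"
  define e' where "e' = e / (b - a + 1)"
  have e': "e' > 0" using e ab by (simp add: e'_def)
  have "h b \<le> (K + e') * (b - a) + e'" by (rule dini_growth_eps[OF assms e'])
  also have "\<dots> = K * (b - a) + e' * (b - a + 1)" by (simp add: algebra_simps)
  also have "e' * (b - a + 1) = e" using ab by (simp add: e'_def)
  finally show "h b \<le> K * (b - a) + e" .
qed

lemma dini_gronwall_halving:
  fixes d :: "real \<Rightarrow> 'a \<Rightarrow> real"
  assumes C: "C > 0" and a: "a \<ge> 0" and da: "\<And>x. d a x \<le> 0" and m: "m \<ge> 0"
    and dm: "\<And>t x. t \<in> {a..a + 1 / (2 * C)} \<Longrightarrow> d t x \<le> m"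
    and cont: "\<And>x. continuous_on {0..} (\<lambda>s. d s x)"
    and der: "\<And>t x m. t \<ge> 0 \<Longrightarrow> 0 \<le> m \<Longrightarrow> 0 < d t x \<Longrightarrow> (\<forall>y. d t y \<le> m) \<Longrightarrow>
               dini_le (\<lambda>s. d s x) t (C * m)"
    and t: "t \<in> {a..a + 1 / (2 * C)}"
  shows "d t x \<le> m / 2"
proof -
  have "d t x \<le> (C * m) * (t - a)"
  proof (rule dini_growth[of a t "\<lambda>s. d s x"])
    show "a \<le> t" using t by simp
    show "d a x \<le> 0" by (rule da)
    show "continuous_on {a..t} (\<lambda>s. d s x)"
      by (rule continuous_on_subset[OF cont]) (use a in auto)
    show "0 \<le> C * m" using C m by simp
    fix r assume r: "a \<le> r" "r < t" "0 < d r x"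
    show "dini_le (\<lambda>s. d s x) r (C * m)"
      by (rule der) (use r a m t dm in auto)
  qed
  also have "\<dots> \<le> (C * m) * (1 / (2 * C))"
    using t C m by (intro mult_left_mono) auto
  also have "\<dots> = m / 2" using C by simp
  finally show ?thesis .
qed

text \<open>Iterating the halving: d \<le> 0 on the whole window.\<close>

lemma dini_gronwall_window:
  fixes d :: "real \<Rightarrow> 'a \<Rightarrow> real"
  assumes C: "C > 0" and a: "a \<ge> 0" and da: "\<And>x. d a x \<le> 0"
    and bnd: "\<And>T. T \<ge> 0 \<Longrightarrow> \<exists>B. \<forall>t\<in>{0..T}. \<forall>x. d t x \<le> B"
    and cont: "\<And>x. continuous_on {0..} (\<lambda>s. d s x)"
    and der: "\<And>t x m. t \<ge> 0 \<Longrightarrow> 0 \<le> m \<Longrightarrow> 0 < d t x \<Longrightarrow> (\<forall>y. d t y \<le> m) \<Longrightarrow>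
               dini_le (\<lambda>s. d s x) t (C * m)"
    and t: "t \<in> {a..a + 1 / (2 * C)}"
  shows "d t x \<le> 0"
proof -
  define \<tau> where "\<tau> = 1 / (2 * C)"
  obtain B where B: "\<forall>t\<in>{0..a + \<tau>}. \<forall>x. d t x \<le> B"
    using bnd[of "a + \<tau>"] a C by (auto simp: \<tau>_def)
  define B' where "B' = max B 0"
  have B': "B' \<ge> 0" by (simp add: B'_def)
  have halved: "\<forall>t\<in>{a..a + \<tau>}. \<forall>x. d t x \<le> B' / 2 ^ n" for n
  proof (induct n)
    case 0
    show ?case
    proof (intro ballI allI)
      fix t x assume "t \<in> {a..a + \<tau>}"
      then have "d t x \<le> B" using B a by auto
      then show "d t x \<le> B' / 2 ^ 0" by (simp add: B'_def)
    qed
  next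
    case (Suc n)
    have "d t x \<le> (B' / 2 ^ n) / 2" if "t \<in> {a..a + \<tau>}" for t x
      by (rule dini_gronwall_halving[OF C a da _ _ cont der])
        (use B' Suc that in \<open>auto simp: \<tau>_def\<close>)
    then show ?case by (simp add: mult.commute)
  qed
  show ?thesis
  proof (rule ccontr)
    assume "\<not> d t x \<le> 0"
    then have pos: "d t x > 0" by simp
    obtain n where "B' / d t x < 2 ^ n" using real_arch_pow[of 2 "B' / d t x"] by auto
    then have "B' / 2 ^ n < d t x" using pos by (simp add: divide_less_eq mult.commute)
    moreover have "d t x \<le> B' / 2 ^ n" using halved[of n] t by (auto simp: \<tau>_def)
    ultimately show False by simp
  qed
qed

text \<open>Covering [0, t] by windows of length 1/(2C) gives the Gronwall-type principle.\<close>

lemma dini_gronwall: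
  fixes d :: "real \<Rightarrow> 'a \<Rightarrow> real"
  assumes C: "C > 0" and d0: "\<And>x. d 0 x \<le> 0"
    and bnd: "\<And>T. T \<ge> 0 \<Longrightarrow> \<exists>B. \<forall>t\<in>{0..T}. \<forall>x. d t x \<le> B"
    and cont: "\<And>x. continuous_on {0..} (\<lambda>s. d s x)"
    and der: "\<And>t x m. t \<ge> 0 \<Longrightarrow> 0 \<le> m \<Longrightarrow> 0 < d t x \<Longrightarrow> (\<forall>y. d t y \<le> m) \<Longrightarrow>
               dini_le (\<lambda>s. d s x) t (C * m)"
    and t: "t \<ge> 0"
  shows "d t x \<le> 0"
proof -
  define \<tau> where "\<tau> = 1 / (2 * C)"
  have tau: "\<tau> > 0" using C by (simp add: \<tau>_def)
  have windows: "\<forall>t\<in>{0..real j * \<tau>}. \<forall>x. d t x \<le> 0" for j :: nat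
  proof (induct j)
    case 0
    then show ?case using d0 by simp
  next
    case (Suc j)
    have "d t x \<le> 0" if "t \<in> {real j * \<tau>..real j * \<tau> + \<tau>}" for t x
      by (rule dini_gronwall_window[OF C _ _ bnd cont der]) (use Suc tau that in \<open>auto simp: \<tau>_def\<close>)
    then show ?case using Suc by (auto simp: distrib_right)
  qed
  obtain j :: nat where "t / \<tau> \<le> real j" using real_arch_simple by blast
  then have "t \<le> real j * \<tau>" using tau by (simp add: divide_le_eq)
  then show ?thesis using windows[of j] t by auto
qed

section \<open>The equation (E_z) and its solutions\<close>

definition rhs :: "(real^'n::finite \<Rightarrow> real) \<Rightarrow> (real^'n \<Rightarrow> real \<Rightarrow> real) \<Rightarrow> real^'n
     \<Rightarrow> (real^'n \<Rightarrow> real) \<Rightarrow> real^'n \<Rightarrow> real" where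
  "rhs k f z w x = (LINT y|lborel. k (y - x) * w y) - w x + w x * f (x + z) (w x)"

lemma lint_shift:
  fixes g :: "'a::euclidean_space \<Rightarrow> real"
  assumes "g \<in> borel_measurable borel"
  shows "(LINT y|lborel. g (a + y)) = (LINT y|lborel. g y)"
proof -
  have "(LINT y|lborel. g y) = (LINT y|distr lborel borel ((+) a). g y)"
    by (simp add: lborel_distr_plus)
  also have "\<dots> = (LINT y|lborel. g (a + y))"
    by (rule integral_distr) (use assms in auto)
  finally show ?thesis by simp
qed

lemma sol_facts:
  assumes "is_solution k f z u0 u"
  shows sol_init: "\<And>x. u 0 x = u0 x"
    and sol_der: "\<And>t x. t \<ge> 0 \<Longrightarrow> ((\<lambda>s. u s x) has_real_derivative rhs k f z (u t) x) (at t within {t..})"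
    and sol_cont: "\<And>x. continuous_on {0..} (\<lambda>s. u s x)"
    and sol_bnd: "\<And>T. T \<ge> 0 \<Longrightarrow> \<exists>B. \<forall>t\<in>{0..T}. \<forall>x. \<bar>u t x\<bar> \<le> B"
    and sol_meas: "\<And>t. t \<ge> 0 \<Longrightarrow> u t \<in> borel_measurable lborel"
proof -
  note a = assms[unfolded is_solution_def]
  show "\<And>x. u 0 x = u0 x" "\<And>T. T \<ge> 0 \<Longrightarrow> \<exists>B. \<forall>t\<in>{0..T}. \<forall>x. \<bar>u t x\<bar> \<le> B"
    "\<And>t. t \<ge> 0 \<Longrightarrow> u t \<in> borel_measurable lborel" using a by blast+
  have d: "((\<lambda>s. u s x) has_real_derivative rhs k f z (u t) x) (at t within {0..})" if "t \<ge> 0" for t x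
    using a that unfolding rhs_def by blast
  show "\<And>t x. t \<ge> 0 \<Longrightarrow> ((\<lambda>s. u s x) has_real_derivative rhs k f z (u t) x) (at t within {t..})"
    by (rule DERIV_subset[OF d]) auto
  show "continuous_on {0..} (\<lambda>s. u s x)" for x
    unfolding continuous_on_eq_continuous_within using d DERIV_continuous by (metis atLeast_iff)
qed

lemma sol_shift:
  assumes "is_solution k f z u0 u" "a > 0"
  shows "is_solution k f z (u a) (\<lambda>s. u (s + a))"
proof -
  note s = assms(1)[unfolded is_solution_def]
  have der: "((\<lambda>s. u (s + a) x) has_real_derivative
          ((LINT y|lborel. k (y - x) * u (t + a) y) - u (t + a) x + u (t + a) x * f (x + z) (u (t + a) x)))
          (at t within {0..})" if t: "t \<ge> 0" for t x
  proof -
    have ta: "t + a \<ge> 0" using t assms(2) by simp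
    have "((\<lambda>s. u s x) has_real_derivative
          ((LINT y|lborel. k (y - x) * u (t + a) y) - u (t + a) x + u (t + a) x * f (x + z) (u (t + a) x)))
          (at (t + a) within {0..})" using s ta by blast
    moreover have "at (t + a) within {0..} = at (t + a)"
      by (rule at_within_interior) (use t assms(2) in simp)
    ultimately have "((\<lambda>s. u s x) has_real_derivative
          ((LINT y|lborel. k (y - x) * u (t + a) y) - u (t + a) x + u (t + a) x * f (x + z) (u (t + a) x)))
          (at (t + a))" by simp
    then show ?thesis unfolding DERIV_shift by (rule has_field_derivative_at_within)
  qed
  have meas: "u (t + a) \<in> borel_measurable lborel" if "t \<ge> 0" for t
  proof -
    have "t + a \<ge> 0" using that assms(2) by simp
    then show ?thesis using s by blast
  qed
  have bnd: "\<exists>B. \<forall>t\<in>{0..T}. \<forall>x. \<bar>u (t + a) x\<bar> \<le> B" if "T \<ge> 0" for T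
  proof -
    have "T + a \<ge> 0" using that assms(2) by simp
    then obtain B where B: "\<forall>t\<in>{0..T + a}. \<forall>x. \<bar>u t x\<bar> \<le> B" using s by blast
    show ?thesis
    proof (intro exI[of _ B] ballI allI)
      fix t x assume "t \<in> {0..T}"
      then have "t + a \<in> {0..T + a}" using assms(2) by simp
      then show "\<bar>u (t + a) x\<bar> \<le> B" using B by blast
    qed
  qed
  show ?thesis unfolding is_solution_def
    using der meas bnd by simp
qed

definition dini_subsolution :: "(real^'n::finite \<Rightarrow> real) \<Rightarrow> (real^'n \<Rightarrow> real \<Rightarrow> real) \<Rightarrow> real^'n
      \<Rightarrow> (real \<Rightarrow> real^'n \<Rightarrow> real) \<Rightarrow> bool" where
  "dini_subsolution k f z V \<longleftrightarrow>
     (\<forall>x. continuous_on {0..} (\<lambda>s. V s x)) \<and> (\<forall>t\<ge>0. V t \<in> borel_measurable lborel) \<and>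
     (\<forall>T\<ge>0. \<exists>B. \<forall>t\<in>{0..T}. \<forall>x. \<bar>V t x\<bar> \<le> B) \<and>
     (\<forall>t\<ge>0. \<forall>x. dini_le (\<lambda>s. V s x) t (rhs k f z (V t) x))"

definition dini_supersolution :: "(real^'n::finite \<Rightarrow> real) \<Rightarrow> (real^'n \<Rightarrow> real \<Rightarrow> real) \<Rightarrow> real^'n
      \<Rightarrow> (real \<Rightarrow> real^'n \<Rightarrow> real) \<Rightarrow> bool" where
  "dini_supersolution k f z V \<longleftrightarrow>
     (\<forall>x. continuous_on {0..} (\<lambda>s. V s x)) \<and> (\<forall>t\<ge>0. V t \<in> borel_measurable lborel) \<and>
     (\<forall>T\<ge>0. \<exists>B. \<forall>t\<in>{0..T}. \<forall>x. \<bar>V t x\<bar> \<le> B) \<and>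
     (\<forall>t\<ge>0. \<forall>x. dini_le (\<lambda>s. - V s x) t (- rhs k f z (V t) x))"

lemma solution_is_subsolution:
  assumes sol: "is_solution k f z u0 u"
  shows "dini_subsolution k f z u"
  unfolding dini_subsolution_def
  using sol_cont[OF sol] sol_meas[OF sol] sol_bnd[OF sol] dini_le_deriv[OF sol_der[OF sol]] by blast

locale kernel_reaction =
  fixes k :: "real^'n::finite \<Rightarrow> real" and f :: "real^'n \<Rightarrow> real \<Rightarrow> real" and \<delta>0 \<Lambda> :: real
  assumes k_cont: "continuous_on UNIV k"
    and k_nonneg: "\<And>y. k y \<ge> 0"
    and k_supp: "\<And>y. norm y \<ge> \<delta>0 \<Longrightarrow> k y = 0"
    and k_mass: "(LINT y|lborel. k y) = 1"
    and f_le: "\<And>x w. f x w \<le> \<Lambda>"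
    and f_antimono: "\<And>x a b. 0 \<le> a \<Longrightarrow> a \<le> b \<Longrightarrow> f x b \<le> f x a"
    and f_neg: "\<And>x w. w \<le> 0 \<Longrightarrow> f x w = f x 0"
begin

lemma kernel_shift_cont: "continuous_on UNIV (\<lambda>y. k (y - x))"
  by (rule continuous_on_compose2[OF k_cont continuous_on_diff[OF continuous_on_id continuous_on_const]]) simp

lemma kernel_shift_meas: "(\<lambda>y. k (y - x)) \<in> borel_measurable lborel"
  using borel_measurable_continuous_onI[OF kernel_shift_cont] by simp

text \<open>Integrability against the kernel: continuous functions (by compact support of k) \<dots>\<close>

lemma kernel_integrable_cont:
  assumes "continuous_on UNIV g"
  shows "integrable lborel (\<lambda>y. k (y - x) * g y)"
proof -
  have c: "continuous_on (cball x \<delta>0) (\<lambda>y. k (y - x) * g y)"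
    by (rule continuous_on_mult[OF continuous_on_subset[OF kernel_shift_cont] continuous_on_subset[OF assms]]) simp_all
  have int: "integrable lborel (\<lambda>y. indicator (cball x \<delta>0) y *\<^sub>R (k (y - x) * g y))"
    by (rule borel_integrable_compact[OF compact_cball c])
  have pt: "indicator (cball x \<delta>0) y *\<^sub>R (k (y - x) * g y) = k (y - x) * g y" for y
  proof (cases "y \<in> cball x \<delta>0")
    case False
    then have "norm (y - x) \<ge> \<delta>0" by (simp add: dist_norm norm_minus_commute)
    then show ?thesis using False k_supp by simp
  qed simp
  have eq: "(\<lambda>y. indicator (cball x \<delta>0) y *\<^sub>R (k (y - x) * g y)) = (\<lambda>y. k (y - x) * g y)"
    by (rule ext) (rule pt)
  show ?thesis using int unfolding eq .
qed

lemma kernel_integrable: "integrable lborel (\<lambda>y. k (y - x))"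
  using kernel_integrable_cont[of "\<lambda>_. 1" x] by simp

lemma kernel_integrable_bdd:
  assumes "g \<in> borel_measurable lborel" "\<And>y. \<bar>g y\<bar> \<le> B"
  shows "integrable lborel (\<lambda>y. k (y - x) * g y)"
proof (rule Bochner_Integration.integrable_bound[of _ "\<lambda>y. B * k (y - x)"])
  show "integrable lborel (\<lambda>y. B * k (y - x))" using kernel_integrable by (rule integrable_mult_right)
  show "(\<lambda>y. k (y - x) * g y) \<in> borel_measurable lborel"
    using kernel_shift_meas assms(1) by (rule borel_measurable_times)
  show "AE y in lborel. norm (k (y - x) * g y) \<le> norm (B * k (y - x))"
  proof (rule AE_I2)
    fix y
    have B: "B \<ge> 0" using assms(2)[of y] by simp
    have "\<bar>k (y - x) * g y\<bar> = k (y - x) * \<bar>g y\<bar>" using k_nonneg by (simp add: abs_mult)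
    also have "\<dots> \<le> k (y - x) * B" using k_nonneg assms(2) by (intro mult_left_mono) auto
    finally show "norm (k (y - x) * g y) \<le> norm (B * k (y - x))" using B k_nonneg by (simp add: abs_mult mult.commute)
  qed
qed

lemma kernel_mass_shift: "(LINT y|lborel. k (y - x)) = 1"
proof -
  have "(LINT y|lborel. (\<lambda>y. k (y - x)) (x + y)) = (LINT y|lborel. k (y - x))"
    by (rule lint_shift) (use kernel_shift_meas in simp)
  then show ?thesis using k_mass by simp
qed

lemma reaction_increment_le:
  assumes "b < a" "0 \<le> b \<or> a \<le> 0"
  shows "a * f y a - b * f y b \<le> \<bar>\<Lambda>\<bar> * (a - b)"
  using assms(2)
proof
  assume b: "0 \<le> b"
  have "f y a \<le> f y b" using f_antimono[OF b] assms(1) by simp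
  then have 1: "b * (f y a - f y b) \<le> 0" using b by (simp add: mult_nonneg_nonpos)
  have "f y a \<le> \<bar>\<Lambda>\<bar>" using f_le[of y a] by simp
  then have 2: "(a - b) * f y a \<le> (a - b) * \<bar>\<Lambda>\<bar>" using assms(1) by (intro mult_left_mono) auto
  have "a * f y a - b * f y b = (a - b) * f y a + b * (f y a - f y b)" by (simp add: algebra_simps)
  then show ?thesis using 1 2 by (simp add: mult.commute)
next
  assume a: "a \<le> 0"
  have "b \<le> 0" using a assms(1) by simp
  then have "f y a = f y 0" "f y b = f y 0" using f_neg[OF a] f_neg[of b] by blast+
  moreover have "f y 0 \<le> \<bar>\<Lambda>\<bar>" using f_le[of y 0] by simp
  then have "(a - b) * f y 0 \<le> (a - b) * \<bar>\<Lambda>\<bar>" using assms(1) by (intro mult_left_mono) auto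
  ultimately show ?thesis by (simp add: algebra_simps)
qed

lemma rhs_diff_le:
  assumes mv: "v \<in> borel_measurable lborel" and mu: "u \<in> borel_measurable lborel"
    and bv: "\<And>y. \<bar>v y\<bar> \<le> B" and bu: "\<And>y. \<bar>u y\<bar> \<le> B"
    and lt: "u x < v x" and sg: "0 \<le> u x \<or> v x \<le> 0"
    and m: "\<And>y. v y - u y \<le> m"
  shows "rhs k f z v x - rhs k f z u x \<le> (1 + \<bar>\<Lambda>\<bar>) * m"
proof -
  have iv: "integrable lborel (\<lambda>y. k (y - x) * v y)" by (rule kernel_integrable_bdd[OF mv bv])
  have iu: "integrable lborel (\<lambda>y. k (y - x) * u y)" by (rule kernel_integrable_bdd[OF mu bu])
  have "(LINT y|lborel. k (y - x) * v y) - (LINT y|lborel. k (y - x) * u y)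
        = (LINT y|lborel. k (y - x) * v y - k (y - x) * u y)"
    using iv iu by simp
  also have "\<dots> \<le> (LINT y|lborel. m * k (y - x))"
  proof (rule integral_mono)
    show "integrable lborel (\<lambda>y. k (y - x) * v y - k (y - x) * u y)" using iv iu by simp
    show "integrable lborel (\<lambda>y. m * k (y - x))" using kernel_integrable by (rule integrable_mult_right)
    fix y
    have "k (y - x) * (v y - u y) \<le> k (y - x) * m" using k_nonneg m by (intro mult_left_mono) auto
    then show "k (y - x) * v y - k (y - x) * u y \<le> m * k (y - x)" by (simp add: algebra_simps)
  qed
  also have "\<dots> = m" using kernel_mass_shift by simp
  finally have I: "(LINT y|lborel. k (y - x) * v y) - (LINT y|lborel. k (y - x) * u y) \<le> m" .
  have N: "v x * f (x + z) (v x) - u x * f (x + z) (u x) \<le> \<bar>\<Lambda>\<bar> * (v x - u x)"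
    by (rule reaction_increment_le[OF lt sg])
  have "\<bar>\<Lambda>\<bar> * (v x - u x) \<le> \<bar>\<Lambda>\<bar> * m" using m by (intro mult_left_mono) auto
  then show ?thesis using I N lt unfolding rhs_def by (simp add: algebra_simps)
qed

lemma comparison_principle:
  fixes v u :: "real \<Rightarrow> real^'n \<Rightarrow> real"
  assumes v0: "\<And>x. v 0 x \<le> u 0 x"
    and bnd: "\<And>T. T \<ge> 0 \<Longrightarrow> \<exists>B. \<forall>t\<in>{0..T}. \<forall>x. \<bar>v t x\<bar> \<le> B \<and> \<bar>u t x\<bar> \<le> B"
    and mv: "\<And>t. t \<ge> 0 \<Longrightarrow> v t \<in> borel_measurable lborel"
    and mu: "\<And>t. t \<ge> 0 \<Longrightarrow> u t \<in> borel_measurable lborel"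
    and cont: "\<And>x. continuous_on {0..} (\<lambda>s. v s x - u s x)"
    and sgn: "\<And>t x. t \<ge> 0 \<Longrightarrow> u t x < v t x \<Longrightarrow> 0 \<le> u t x \<or> v t x \<le> 0"
    and der: "\<And>t x. t \<ge> 0 \<Longrightarrow> u t x < v t x \<Longrightarrow>
               dini_le (\<lambda>s. v s x - u s x) t (rhs k f z (v t) x - rhs k f z (u t) x)"
    and t: "t \<ge> 0"
  shows "v t x \<le> u t x"
proof -
  have "(\<lambda>t x. v t x - u t x) t x \<le> 0"
  proof (rule dini_gronwall[where C="1 + \<bar>\<Lambda>\<bar>" and d="\<lambda>t x. v t x - u t x"])
    show "0 < 1 + \<bar>\<Lambda>\<bar>" by simp
    show "v 0 x - u 0 x \<le> 0" for x using v0[of x] by simp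
    show "\<exists>B. \<forall>t\<in>{0..T}. \<forall>x. v t x - u t x \<le> B" if T: "T \<ge> 0" for T
    proof -
      obtain B where "\<forall>t\<in>{0..T}. \<forall>x. \<bar>v t x\<bar> \<le> B \<and> \<bar>u t x\<bar> \<le> B" using bnd[OF T] by blast
      then show ?thesis
      proof (intro exI[of _ "2 * B"] ballI allI)
        fix t x assume "\<forall>t\<in>{0..T}. \<forall>x. \<bar>v t x\<bar> \<le> B \<and> \<bar>u t x\<bar> \<le> B" "t \<in> {0..T}"
        then have "\<bar>v t x\<bar> \<le> B" "\<bar>u t x\<bar> \<le> B" by blast+
        then show "v t x - u t x \<le> 2 * B" by linarith
      qed
    qed
    show "continuous_on {0..} (\<lambda>s. v s x - u s x)" for x by (rule cont)
    show "dini_le (\<lambda>s. v s x - u s x) t ((1 + \<bar>\<Lambda>\<bar>) * m)"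
      if t: "t \<ge> 0" and m: "0 \<le> m" and pos: "0 < v t x - u t x" and all: "\<forall>y. v t y - u t y \<le> m"
      for t x m
    proof (rule dini_le_mono[OF der])
      obtain B where B: "\<forall>s\<in>{0..t}. \<forall>x. \<bar>v s x\<bar> \<le> B \<and> \<bar>u s x\<bar> \<le> B" using bnd t by blast
      show "rhs k f z (v t) x - rhs k f z (u t) x \<le> (1 + \<bar>\<Lambda>\<bar>) * m"
      proof (rule rhs_diff_le[OF mv[OF t] mu[OF t]])
        show "\<bar>v t y\<bar> \<le> B" for y using B t by auto
        show "\<bar>u t y\<bar> \<le> B" for y using B t by auto
        show "u t x < v t x" using pos by simp
        then show "0 \<le> u t x \<or> v t x \<le> 0" using sgn t by blast
        show "v t y - u t y \<le> m" for y using all by blast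
      qed
    qed (use t pos in auto)
  qed (rule t)
  then show ?thesis by simp
qed

text \<open>Solutions with non-negative initial data stay non-negative (compare with 0).\<close>

lemma sol_nonneg:
  assumes sol: "is_solution k f z u0 u" and u0: "\<And>x. u0 x \<ge> 0" and t: "t \<ge> 0"
  shows "u t x \<ge> 0"
proof -
  have "(\<lambda>t x. 0) t x \<le> u t x"
  proof (rule comparison_principle[where z=z and v="\<lambda>t x. 0" and u=u])
    show "0 \<le> u 0 x" for x using u0 sol_init[OF sol] by simp
    show "\<exists>B. \<forall>t\<in>{0..T}. \<forall>x. \<bar>0::real\<bar> \<le> B \<and> \<bar>u t x\<bar> \<le> B" if T: "T \<ge> 0" for T
    proof -
      obtain B where B: "\<forall>t\<in>{0..T}. \<forall>x. \<bar>u t x\<bar> \<le> B" using sol_bnd[OF sol T] by blast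
      show ?thesis
      proof (intro exI[of _ "max B 0"] ballI allI conjI)
        fix t x assume "t \<in> {0..T}"
        then have "\<bar>u t x\<bar> \<le> B" using B by blast
        then show "\<bar>u t x\<bar> \<le> max B 0" by simp
      qed simp
    qed
    show "(\<lambda>x. 0::real) \<in> borel_measurable lborel" for t :: real by simp
    show "u t \<in> borel_measurable lborel" if "t \<ge> 0" for t by (rule sol_meas[OF sol that])
    show "continuous_on {0..} (\<lambda>s. 0 - u s x)" for x
      using sol_cont[OF sol] by (intro continuous_intros) auto
    show "0 \<le> u t x \<or> (0::real) \<le> 0" for t x by simp
    show "dini_le (\<lambda>s. 0 - u s x) t (rhs k f z (\<lambda>x. 0) x - rhs k f z (u t) x)" if "t \<ge> 0" for t x
    proof -
      have "((\<lambda>s. 0 - u s x) has_real_derivative (0 - rhs k f z (u t) x)) (at t within {t..})"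
        by (intro DERIV_diff DERIV_const sol_der[OF sol that])
      moreover have "rhs k f z (\<lambda>x. 0) x = 0" by (simp add: rhs_def)
      ultimately show ?thesis by (simp add: dini_le_deriv)
    qed
  qed (rule t)
  then show ?thesis by simp
qed

lemma subsolution_le_solution:
  assumes sub: "dini_subsolution k f z V" and sol: "is_solution k f z u0 u"
    and init: "\<And>x. V 0 x \<le> u0 x" and u0: "\<And>x. u0 x \<ge> 0" and t: "t \<ge> 0"
  shows "V t x \<le> u t x"
proof (rule comparison_principle[where z=z and v=V and u=u])
  note V = sub[unfolded dini_subsolution_def]
  show "V 0 x \<le> u 0 x" for x using init sol_init[OF sol] by simp
  show "\<exists>B. \<forall>t\<in>{0..T}. \<forall>x. \<bar>V t x\<bar> \<le> B \<and> \<bar>u t x\<bar> \<le> B" if T: "T \<ge> 0" for T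
  proof -
    obtain B1 where B1: "\<forall>t\<in>{0..T}. \<forall>x. \<bar>V t x\<bar> \<le> B1" using V T by blast
    obtain B2 where B2: "\<forall>t\<in>{0..T}. \<forall>x. \<bar>u t x\<bar> \<le> B2" using sol_bnd[OF sol T] by blast
    show ?thesis
    proof (intro exI[of _ "max B1 B2"] ballI allI conjI)
      fix t x assume "t \<in> {0..T}"
      then have "\<bar>V t x\<bar> \<le> B1" "\<bar>u t x\<bar> \<le> B2" using B1 B2 by blast+
      then show "\<bar>V t x\<bar> \<le> max B1 B2" "\<bar>u t x\<bar> \<le> max B1 B2" by auto
    qed
  qed
  show "V t \<in> borel_measurable lborel" if "t \<ge> 0" for t using V that by blast
  show "u t \<in> borel_measurable lborel" if "t \<ge> 0" for t by (rule sol_meas[OF sol that])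
  show "continuous_on {0..} (\<lambda>s. V s x - u s x)" for x
    using V by (intro continuous_on_diff sol_cont[OF sol]) blast
  show "0 \<le> u t x \<or> V t x \<le> 0" if "t \<ge> 0" for t x using sol_nonneg[OF sol u0 that] by simp
  show "dini_le (\<lambda>s. V s x - u s x) t (rhs k f z (V t) x - rhs k f z (u t) x)" if t: "t \<ge> 0" for t x
  proof -
    have "dini_le (\<lambda>s. V s x) t (rhs k f z (V t) x)" using V t by blast
    then have "dini_le (\<lambda>s. V s x + - u s x) t (rhs k f z (V t) x + - rhs k f z (u t) x)"
      by (rule dini_le_add[OF _ dini_le_deriv[OF DERIV_minus[OF sol_der[OF sol t]]]])
    then show ?thesis by simp
  qed
qed (rule t)

lemma solution_le_supersolution:
  assumes sup: "dini_supersolution k f z P" and sol: "is_solution k f z u0 u"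
    and init: "\<And>x. u0 x \<le> P 0 x" and P: "\<And>t x. t \<ge> 0 \<Longrightarrow> P t x \<ge> 0" and t: "t \<ge> 0"
  shows "u t x \<le> P t x"
proof (rule comparison_principle[where z=z and v=u and u=P])
  note V = sup[unfolded dini_supersolution_def]
  show "u 0 x \<le> P 0 x" for x using init sol_init[OF sol] by simp
  show "\<exists>B. \<forall>t\<in>{0..T}. \<forall>x. \<bar>u t x\<bar> \<le> B \<and> \<bar>P t x\<bar> \<le> B" if T: "T \<ge> 0" for T
  proof -
    obtain B1 where B1: "\<forall>t\<in>{0..T}. \<forall>x. \<bar>P t x\<bar> \<le> B1" using V T by blast
    obtain B2 where B2: "\<forall>t\<in>{0..T}. \<forall>x. \<bar>u t x\<bar> \<le> B2" using sol_bnd[OF sol T] by blast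
    show ?thesis
    proof (intro exI[of _ "max B1 B2"] ballI allI conjI)
      fix t x assume "t \<in> {0..T}"
      then have "\<bar>u t x\<bar> \<le> B2" "\<bar>P t x\<bar> \<le> B1" using B1 B2 by blast+
      then show "\<bar>u t x\<bar> \<le> max B1 B2" "\<bar>P t x\<bar> \<le> max B1 B2" by auto
    qed
  qed
  show "P t \<in> borel_measurable lborel" if "t \<ge> 0" for t using V that by blast
  show "u t \<in> borel_measurable lborel" if "t \<ge> 0" for t by (rule sol_meas[OF sol that])
  show "continuous_on {0..} (\<lambda>s. u s x - P s x)" for x
    using V by (intro continuous_on_diff sol_cont[OF sol]) blast
  show "0 \<le> P t x \<or> u t x \<le> 0" if "t \<ge> 0" for t x using P[OF that] by simp
  show "dini_le (\<lambda>s. u s x - P s x) t (rhs k f z (u t) x - rhs k f z (P t) x)" if t: "t \<ge> 0" for t x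
  proof -
    have "dini_le (\<lambda>s. - P s x) t (- rhs k f z (P t) x)" using V t by blast
    then have "dini_le (\<lambda>s. u s x + - P s x) t (rhs k f z (u t) x + - rhs k f z (P t) x)"
      by (rule dini_le_add[OF dini_le_deriv[OF sol_der[OF sol t]]])
    then show ?thesis by simp
  qed
qed (rule t)

lemma solution_le_shifted:
  assumes solv: "is_solution k f z v0 v" and solu: "is_solution k f z u0 u"
    and a: "a > 0" and u0: "\<And>x. u0 x \<ge> 0" and init: "\<And>x. v0 x \<le> u a x" and t: "t \<ge> 0"
  shows "v t x \<le> u (t + a) x"
proof -
  have shifted: "is_solution k f z (u a) (\<lambda>s. u (s + a))" by (rule sol_shift[OF solu a])
  have "u a x \<ge> 0" for x using sol_nonneg[OF solu u0] a by simp
  then have "v t x \<le> (\<lambda>s. u (s + a)) t x"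
    by (intro subsolution_le_solution[OF solution_is_subsolution[OF solv] shifted _ _ t])
      (use init sol_init[OF solv] in auto)
  then show ?thesis by simp
qed

lemma shifted_le_solution:
  assumes solu: "is_solution k f z u0 u" and solv: "is_solution k f z v0 v"
    and a: "a > 0" and v0: "\<And>x. v0 x \<ge> 0" and init: "\<And>x. u a x \<le> v0 x" and t: "t \<ge> 0"
  shows "u (t + a) x \<le> v t x"
proof -
  have "dini_subsolution k f z (\<lambda>s. u (s + a))" by (rule solution_is_subsolution[OF sol_shift[OF solu a]])
  then have "(\<lambda>s. u (s + a)) t x \<le> v t x"
    by (rule subsolution_le_solution[OF _ solv _ v0 t]) (use init in simp)
  then show ?thesis by simp
qed

end

section \<open>Periodic functions, eigenfunctions and the nonlinearity\<close>

lemma per_int_nat: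
  assumes per: "\<forall>x i. v (x + p i *\<^sub>R axis i 1) = v x"
  shows "v (x + (real n * p i) *\<^sub>R axis i (1::real)) = v x"
proof (induct n)
  case (Suc n)
  have "x + (real (Suc n) * p i) *\<^sub>R axis i 1 = (x + (real n * p i) *\<^sub>R axis i 1) + p i *\<^sub>R axis i 1"
    by (simp only: of_nat_Suc distrib_right mult_1_left scaleR_add_left add_ac)
  then show ?case using per Suc by metis
qed simp

lemma per_int:
  assumes per: "\<forall>x i. v (x + p i *\<^sub>R axis i 1) = v x"
  shows "v (x + (of_int n * p i) *\<^sub>R axis i (1::real)) = v x"
proof (cases "n \<ge> 0")
  case True
  then have "of_int n = real (nat n)" by simp
  then show ?thesis using per_int_nat[OF per, of x "nat n" i] by metis
next
  case False
  define r where "r = real (nat (- n))"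
  define y where "y = x + (of_int n * p i) *\<^sub>R axis i (1::real)"
  have r0: "of_int n + r = 0" using False by (simp add: r_def)
  have "y + (r * p i) *\<^sub>R axis i 1 = x + ((of_int n * p i) *\<^sub>R axis i 1 + (r * p i) *\<^sub>R axis i 1)"
    by (simp only: y_def add.assoc)
  also have "\<dots> = x + ((of_int n + r) * p i) *\<^sub>R axis i 1"
    by (simp only: scaleR_add_left[symmetric] distrib_right[symmetric])
  also have "\<dots> = x" using r0 by simp
  finally have "x = y + (r * p i) *\<^sub>R axis i 1" by simp
  then have "v x = v y" using per_int_nat[OF per, of y "nat (-n)" i] unfolding r_def by metis
  then show ?thesis by (simp add: y_def)
qed

lemma per_sum:
  fixes v :: "real^'n::finite \<Rightarrow> 'b"
  assumes per: "\<forall>x i. v (x + p i *\<^sub>R axis i 1) = v x"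
  shows "v (x + (\<Sum>i\<in>S. (of_int (n i) * p i) *\<^sub>R axis i 1)) = v x"
proof -
  have "finite S" by simp
  then show ?thesis
  proof (induct S arbitrary: x rule: finite_induct)
    case (insert j S)
    define a where "a = (of_int (n j) * p j) *\<^sub>R axis j (1::real)"
    define b where "b = (\<Sum>i\<in>S. (of_int (n i) * p i) *\<^sub>R axis i (1::real))"
    have "x + (\<Sum>i\<in>insert j S. (of_int (n i) * p i) *\<^sub>R axis i 1) = x + (a + b)"
      unfolding sum.insert[OF insert(1,2)] a_def b_def ..
    also have "\<dots> = (x + b) + a" by (simp only: add_ac)
    finally have e: "x + (\<Sum>i\<in>insert j S. (of_int (n i) * p i) *\<^sub>R axis i 1) = (x + b) + a" .
    have "v ((x + b) + a) = v (x + b)" unfolding a_def by (rule per_int[OF per])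
    also have "\<dots> = v x" unfolding b_def by (rule insert(3))
    finally show ?case unfolding e .
  qed simp
qed

lemma per_cell:
  fixes v :: "real^'n::finite \<Rightarrow> 'b"
  assumes per: "\<forall>x i. v (x + p i *\<^sub>R axis i 1) = v x" and pp: "\<forall>i. p i > 0"
  shows "\<exists>y\<in>cbox 0 (\<chi> i. p i). v y = v x"
proof -
  define n where "n i = - \<lfloor>x $ i / p i\<rfloor>" for i
  define y where "y = x + (\<Sum>i\<in>UNIV. (of_int (n i) * p i) *\<^sub>R axis i (1::real))"
  have yj: "y $ j = x $ j - of_int \<lfloor>x $ j / p j\<rfloor> * p j" for j
  proof -
    have "(\<Sum>i\<in>UNIV. ((of_int (n i) * p i) *\<^sub>R axis i (1::real)) $ j) = (\<Sum>i\<in>UNIV. if i = j then of_int (n j) * p j else 0)"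
      by (rule sum.cong) (auto simp: axis_def)
    also have "\<dots> = of_int (n j) * p j" by simp
    finally show ?thesis by (simp add: y_def n_def)
  qed
  have "y \<in> cbox 0 (\<chi> i. p i)"
    unfolding mem_box_cart
  proof
    fix j
    have pj: "p j > 0" using pp by simp
    have f1: "of_int \<lfloor>x $ j / p j\<rfloor> \<le> x $ j / p j" by (rule of_int_floor_le)
    have f2: "x $ j / p j < of_int \<lfloor>x $ j / p j\<rfloor> + 1" by (rule real_of_int_floor_add_one_gt)
    have "of_int \<lfloor>x $ j / p j\<rfloor> * p j \<le> x $ j" using f1 pj by (simp add: le_divide_eq)
    moreover have "x $ j < (of_int \<lfloor>x $ j / p j\<rfloor> + 1) * p j" using f2 by (simp only: pos_divide_less_eq[OF pj])
    ultimately show "(0::real^'n) $ j \<le> y $ j \<and> y $ j \<le> (\<chi> i. p i) $ j"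
      unfolding yj by (simp add: algebra_simps)
  qed
  moreover have "v y = v x" unfolding y_def by (rule per_sum[OF per])
  ultimately show ?thesis by blast
qed

lemma per_bounded:
  assumes "v \<in> Xp_real p" and pp: "\<forall>i. p i > 0"
  shows "\<exists>B. \<forall>x. \<bar>v x\<bar> \<le> B"
proof -
  have c: "continuous_on UNIV v" and per: "\<forall>x i. v (x + p i *\<^sub>R axis i 1) = v x"
    using assms(1) by (auto simp: Xp_real_def)
  have "compact (v ` cbox 0 (\<chi> i. p i))"
    by (rule compact_continuous_image[OF continuous_on_subset[OF c] compact_cbox]) simp
  then obtain B where B: "\<forall>y\<in>v ` cbox 0 (\<chi> i. p i). norm y \<le> B"
    using compact_imp_bounded bounded_iff by metis
  show ?thesis
  proof (intro exI[of _ B] allI)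
    fix x
    obtain y where "y \<in> cbox 0 (\<chi> i. p i)" "v y = v x" using per_cell[OF per pp] by blast
    then show "\<bar>v x\<bar> \<le> B" using B by force
  qed
qed

lemma per_min:
  assumes "v \<in> Xp_real p" and pp: "\<forall>i. p i > 0"
  shows "\<exists>x0. \<forall>x. v x0 \<le> v x"
proof -
  have c: "continuous_on UNIV v" and per: "\<forall>x i. v (x + p i *\<^sub>R axis i 1) = v x"
    using assms(1) by (auto simp: Xp_real_def)
  have "0 \<in> cbox 0 (\<chi> i. p i)" unfolding mem_box_cart using pp by (simp add: less_imp_le)
  then have ne: "cbox 0 (\<chi> i. p i) \<noteq> {}" by blast
  obtain x0 where x0: "x0 \<in> cbox 0 (\<chi> i. p i)" "\<forall>y\<in>cbox 0 (\<chi> i. p i). v x0 \<le> v y"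
    using continuous_attains_inf[OF compact_cbox ne continuous_on_subset[OF c]] by auto
  show ?thesis
  proof (intro exI[of _ x0] allI)
    fix x
    obtain y where "y \<in> cbox 0 (\<chi> i. p i)" "v y = v x" using per_cell[OF per pp] by blast
    then show "v x0 \<le> v x" using x0 by force
  qed
qed

lemma per_le_sup:
  assumes "v \<in> Xp_real p" and pp: "\<forall>i. p i > 0" and sup: "(SUP x. v x) = 1"
  shows "v x \<le> 1"
proof -
  obtain B where B: "\<forall>x. \<bar>v x\<bar> \<le> B" using per_bounded[OF assms(1) pp] by blast
  have "bdd_above (range v)"
  proof (rule bdd_aboveI[of _ B])
    fix y assume "y \<in> range v"
    then obtain z where "y = v z" by blast
    then show "y \<le> B" using B abs_le_D1 by blast
  qed
  then have "v x \<le> (SUP x. v x)" by (rule cSUP_upper[OF UNIV_I])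
  then show ?thesis using sup by simp
qed

lemma eig_real:
  assumes "Lop k xi m a0 (\<lambda>x. complex_of_real (g x)) = (\<lambda>x. complex_of_real L * complex_of_real (g x))"
  shows "(LINT y|lborel. exp (- m * ((y - x) \<bullet> xi)) * k (y - x) * g y) - g x + a0 x * g x = L * g x"
proof -
  have "Lop k xi m a0 (\<lambda>x. complex_of_real (g x)) x = complex_of_real L * complex_of_real (g x)"
    using assms by (rule fun_cong)
  moreover have "Kop k xi m (\<lambda>x. complex_of_real (g x)) x
      = complex_of_real (LINT y|lborel. exp (- m * ((y - x) \<bullet> xi)) * k (y - x) * g y)"
    unfolding Kop_def by (simp only: of_real_mult[symmetric] integral_complex_of_real)
  ultimately have "complex_of_real ((LINT y|lborel. exp (- m * ((y - x) \<bullet> xi)) * k (y - x) * g y)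
       - g x + a0 x * g x) = complex_of_real (L * g x)"
    unfolding Lop_def by (simp only: of_real_mult of_real_diff of_real_add)
  then show ?thesis by (simp only: of_real_eq_iff)
qed

lemma f_partial_deriv:
  fixes f :: "real^'n::finite \<Rightarrow> real \<Rightarrow> real"
  assumes H1_C1: "\<exists>D :: ((real^'n) \<times> real) \<Rightarrow> (((real^'n) \<times> real) \<Rightarrow>\<^sub>L real).
                 (\<forall>q \<in> UNIV \<times> {0..}. ((\<lambda>(x, u). f x u) has_derivative blinfun_apply (D q))
                     (at q within UNIV \<times> {0..})) \<and> continuous_on (UNIV \<times> {0..}) D"
  obtains f' where "\<And>u. u \<ge> 0 \<Longrightarrow> ((\<lambda>v. f x v) has_real_derivative f' u) (at u within {0..})"
proof -
  obtain D :: "((real^'n) \<times> real) \<Rightarrow> (((real^'n) \<times> real) \<Rightarrow>\<^sub>L real)" where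
    D: "\<forall>q \<in> UNIV \<times> {0..}. ((\<lambda>(x, u). f x u) has_derivative blinfun_apply (D q)) (at q within UNIV \<times> {0..})"
    using H1_C1 by blast
  have "((\<lambda>v. f x v) has_real_derivative blinfun_apply (D (x, u)) (0, 1)) (at u within {0..})"
    if u: "u \<ge> 0" for u
  proof -
    have g: "((\<lambda>v. (x, v)) has_derivative (\<lambda>h. (0, h))) (at u within {0..})"
      by (auto intro!: derivative_eq_intros)
    have "((\<lambda>v. (\<lambda>(x, u). f x u) (x, v)) has_derivative (\<lambda>h. blinfun_apply (D (x, u)) (0, h))) (at u within {0..})"
    proof (rule has_derivative_in_compose2[where g'="\<lambda>q. blinfun_apply (D q)", OF _ _ _ g])
      show "((\<lambda>(x, u). f x u) has_derivative blinfun_apply (D q)) (at q within UNIV \<times> {0..})"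
        if "q \<in> UNIV \<times> {0..}" for q using D that by blast
      show "(\<lambda>v. (x, v)) ` {0..} \<subseteq> UNIV \<times> {0..}" by auto
      show "u \<in> {0..}" using u by simp
    qed
    moreover have "(\<lambda>h. blinfun_apply (D (x, u)) (0, h)) = (\<lambda>h. blinfun_apply (D (x, u)) (0, 1) * h)"
    proof
      fix h :: real
      have "(0::real^'n, h) = h *\<^sub>R (0, 1)" by simp
      then show "blinfun_apply (D (x, u)) (0, h) = blinfun_apply (D (x, u)) (0, 1) * h"
        by (metis blinfun.scaleR_right mult.commute real_scaleR_def)
    qed
    ultimately show ?thesis unfolding has_field_derivative_def by simp
  qed
  then show ?thesis by (rule that)
qed

lemma f_antimono_H1:
  fixes f :: "real^'n::finite \<Rightarrow> real \<Rightarrow> real"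
  assumes H1_C1: "\<exists>D :: ((real^'n) \<times> real) \<Rightarrow> (((real^'n) \<times> real) \<Rightarrow>\<^sub>L real).
                 (\<forall>q \<in> UNIV \<times> {0..}. ((\<lambda>(x, u). f x u) has_derivative blinfun_apply (D q))
                     (at q within UNIV \<times> {0..})) \<and> continuous_on (UNIV \<times> {0..}) D"
    and H1_mono: "\<exists>\<epsilon>>0. \<forall>x u D. u \<ge> 0 \<longrightarrow>
                   ((\<lambda>v. f x v) has_real_derivative D) (at u within {0..}) \<longrightarrow> D \<le> - \<epsilon>"
    and ab: "0 \<le> a" "a \<le> b"
  shows "f x b \<le> f x a"
proof -
  obtain f' where f': "\<And>u. u \<ge> 0 \<Longrightarrow> ((\<lambda>v. f x v) has_real_derivative f' u) (at u within {0..})"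
    using f_partial_deriv[OF H1_C1] by blast
  have f'_neg: "f' u \<le> 0" if "u \<ge> 0" for u
    using H1_mono f'[OF that] that by (meson less_imp_le order_trans neg_le_0_iff_le)
  have interior: "DERIV (\<lambda>v. f x v) u :> f' u" if "u > 0" for u
  proof -
    have "at u within {0..} = at u" by (rule at_within_interior) (use that in simp)
    then show ?thesis using f'[of u] that by simp
  qed
  have cont: "continuous_on {a..b} (\<lambda>v. f x v)"
  proof -
    have "continuous (at v within {0..}) (\<lambda>v. f x v)" if "v \<in> {a..b}" for v
      using f'[of v] that ab by (intro DERIV_continuous) auto
    then show ?thesis unfolding continuous_on_eq_continuous_within
      using ab by (meson atLeastAtMost_iff atLeast_iff continuous_within_subset order_trans subsetI)
  qed
  have "\<exists>y. DERIV (\<lambda>v. f x v) u :> y \<and> y \<le> 0" if "a < u" "u < b" for u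
    using interior[of u] f'_neg[of u] ab that by (intro exI[of _ "f' u"]) auto
  then show ?thesis by (rule DERIV_nonpos_imp_decreasing_open[OF ab(2) _ cont])
qed

lemma cont_shift: "continuous_on UNIV g \<Longrightarrow> continuous_on UNIV (\<lambda>y::'a::real_normed_vector. g (y + z))"
  by (rule continuous_on_compose2[of UNIV g UNIV "\<lambda>y. y + z"]) (auto intro: continuous_on_add continuous_on_id continuous_on_const)

lemma cont_shiftm: "continuous_on UNIV g \<Longrightarrow> continuous_on UNIV (\<lambda>y::'a::real_normed_vector. g (y - z))"
  by (rule continuous_on_compose2[of UNIV g UNIV "\<lambda>y. y - z"]) (auto intro: continuous_on_diff continuous_on_id continuous_on_const)

lemma shift_int_general:
  fixes W g :: "'a::euclidean_space \<Rightarrow> real"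
  assumes W: "continuous_on UNIV W" and g: "continuous_on UNIV g"
  shows "(LINT y|lborel. W (y - x) * g (y + z)) = (LINT y|lborel. W (y - (x + z)) * g y)"
proof -
  define G where "G y = W (y - (x + z)) * g y" for y
  have "continuous_on UNIV G" unfolding G_def
    by (rule continuous_on_mult[OF cont_shiftm[OF W] g])
  then have "G \<in> borel_measurable borel" by (rule borel_measurable_continuous_onI)
  then have "(LINT y|lborel. G (z + y)) = (LINT y|lborel. G y)" by (rule lint_shift)
  moreover have pt: "G (z + y) = W (y - x) * g (y + z)" for y
  proof -
    have e1: "z + y - (x + z) = y - x" by (simp add: algebra_simps)
    have e2: "z + y = y + z" by (simp add: add.commute)
    have "G (z + y) = W (z + y - (x + z)) * g (z + y)" by (simp only: G_def)
    also have "\<dots> = W (y - x) * g (y + z)" by (subst e1, subst e2, rule refl)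
    finally show ?thesis .
  qed
  ultimately have "(LINT y|lborel. W (y - x) * g (y + z)) = (LINT y|lborel. G y)" by (simp only: pt)
  then show ?thesis by (simp only: G_def)
qed

section \<open>Exponential profiles\<close>

context kernel_reaction
begin

lemma kernel_integral_exp_profile:
  assumes g: "continuous_on UNIV g"
  shows "(LINT y|lborel. k (y - x) * (exp (- m * (y \<bullet> xi + c * T)) * g (y + z)))
       = exp (- m * (x \<bullet> xi + c * T))
         * (LINT w|lborel. exp (- m * ((w - (x + z)) \<bullet> xi)) * k (w - (x + z)) * g w)"
proof -
  define e where "e = exp (- m * (x \<bullet> xi + c * T))"
  have split: "exp (- m * (y \<bullet> xi + c * T)) = e * exp (- m * ((y - x) \<bullet> xi))" for y
  proof -
    have "- m * (y \<bullet> xi + c * T) = - m * (x \<bullet> xi + c * T) + - m * ((y - x) \<bullet> xi)"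
      by (simp add: inner_diff_left algebra_simps)
    then show ?thesis unfolding e_def by (simp only: exp_add)
  qed
  have wcont: "continuous_on UNIV (\<lambda>d. exp (- m * (d \<bullet> xi)) * k d)"
    by (intro continuous_on_mult[OF _ k_cont] continuous_intros)
  have "(LINT y|lborel. k (y - x) * (exp (- m * (y \<bullet> xi + c * T)) * g (y + z)))
      = (LINT y|lborel. e * (exp (- m * ((y - x) \<bullet> xi)) * k (y - x) * g (y + z)))"
    unfolding split by (simp add: mult_ac)
  also have "\<dots> = e * (LINT y|lborel. exp (- m * ((y - x) \<bullet> xi)) * k (y - x) * g (y + z))"
    by simp
  also have "(LINT y|lborel. exp (- m * ((y - x) \<bullet> xi)) * k (y - x) * g (y + z))
      = (LINT w|lborel. exp (- m * ((w - (x + z)) \<bullet> xi)) * k (w - (x + z)) * g w)"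
    using shift_int_general[OF wcont g, of x z] by simp
  finally show ?thesis unfolding e_def .
qed

lemma exp_profile_eigen:
  fixes c T :: real and z :: "real^'n"
  assumes g: "continuous_on UNIV g"
    and eig: "\<And>x. (LINT y|lborel. exp (- m * ((y - x) \<bullet> xi)) * k (y - x) * g y) - g x + f x 0 * g x
                 = L * g x"
  defines "h \<equiv> \<lambda>y. exp (- m * (y \<bullet> xi + c * T)) * g (y + z)"
  shows "(LINT y|lborel. k (y - x) * h y) - h x + f (x + z) 0 * h x = L * h x"
proof -
  have "(LINT y|lborel. k (y - x) * h y) - h x + f (x + z) 0 * h x
      = exp (- m * (x \<bullet> xi + c * T)) * ((LINT w|lborel. exp (- m * ((w - (x + z)) \<bullet> xi)) * k (w - (x + z)) * g w)
          - g (x + z) + f (x + z) 0 * g (x + z))"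
    unfolding h_def kernel_integral_exp_profile[OF g] by (simp add: algebra_simps)
  also have "\<dots> = L * h x" unfolding eig h_def by simp
  finally show ?thesis .
qed

lemma kernel_integrable_exp_profile:
  assumes "continuous_on UNIV g"
  shows "integrable lborel (\<lambda>y. k (y - x) * (exp (- m * (y \<bullet> xi + c * T)) * g (y + z)))"
  by (intro kernel_integrable_cont continuous_on_mult[OF _ cont_shift[OF assms]] continuous_intros)

end

section \<open>The super-solution u^+_{0,z,T}\<close>

locale front_supersolution = kernel_reaction k f \<delta>0 \<Lambda>
  for k :: "real^'n::finite \<Rightarrow> real" and f \<delta>0 \<Lambda> +
  fixes xi :: "real^'n" and c mu mu1 d2 L1 :: real and phi phi1 uplus :: "real^'n \<Rightarrow> real"
  assumes phi_cont: "continuous_on UNIV phi" and phi_nonneg: "\<And>x. phi x \<ge> 0"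
    and phi_eig: "\<And>x. (LINT y|lborel. exp (- mu * ((y - x) \<bullet> xi)) * k (y - x) * phi y) - phi x + f x 0 * phi x
                 = (c * mu) * phi x"
    and phi1_cont: "continuous_on UNIV phi1" and phi1_nonneg: "\<And>x. phi1 x \<ge> 0"
    and phi1_eig: "\<And>x. (LINT y|lborel. exp (- mu1 * ((y - x) \<bullet> xi)) * k (y - x) * phi1 y) - phi1 x + f x 0 * phi1 x
                 = L1 * phi1 x"
    and L1_le: "L1 \<le> c * mu1"
    and uplus_cont: "continuous_on UNIV uplus" and uplus_nonneg: "\<And>x. uplus x \<ge> 0"
    and uplus_bdd: "\<exists>B. \<forall>x. uplus x \<le> B"
    and uplus_stat: "\<And>x. (LINT y|lborel. k (y - x) * uplus y) - uplus x + uplus x * f x (uplus x) = 0"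
    and d2_nonneg: "d2 \<ge> 0"
begin

text \<open>The exponential branch E of u^+_{0,z,T} = min E (u^+(\<cdot> + z)), and E_dot, the
  derivative of s \<mapsto> E z (T - s) y.\<close>

definition E :: "real^'n \<Rightarrow> real \<Rightarrow> real^'n \<Rightarrow> real" where
  "E z T y = exp (- mu * (y \<bullet> xi + c * T)) * phi (y + z) + d2 * (exp (- mu1 * (y \<bullet> xi + c * T)) * phi1 (y + z))"

definition E_dot :: "real^'n \<Rightarrow> real \<Rightarrow> real^'n \<Rightarrow> real" where
  "E_dot z T y = c * mu * (exp (- mu * (y \<bullet> xi + c * T)) * phi (y + z))
      + d2 * (c * mu1 * (exp (- mu1 * (y \<bullet> xi + c * T)) * phi1 (y + z)))"

abbreviation P :: "real^'n \<Rightarrow> real \<Rightarrow> real^'n \<Rightarrow> real" where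
  "P \<equiv> uplus0 xi c mu mu1 d2 phi phi1 uplus"

lemma P_eq_min: "P z T y = min (E z T y) (uplus (y + z))"
  by (simp add: E_def uplus0_def algebra_simps)

lemma E_nonneg: "E z T y \<ge> 0"
  unfolding E_def using phi_nonneg phi1_nonneg d2_nonneg by (intro add_nonneg_nonneg mult_nonneg_nonneg) auto

lemma P_nonneg: "P z T y \<ge> 0"
  unfolding P_eq_min using E_nonneg uplus_nonneg by simp

lemma E_cont_space: "continuous_on UNIV (E z T)"
  unfolding E_def
  by (intro continuous_on_add continuous_on_mult[OF _ cont_shift[OF phi_cont]]
      continuous_on_mult[OF _ cont_shift[OF phi1_cont]] continuous_intros)

lemma P_cont_space: "continuous_on UNIV (P z T)"
  unfolding P_eq_min by (rule continuous_on_min[OF E_cont_space cont_shift[OF uplus_cont]])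

lemma E_time_deriv: "((\<lambda>s. E z (T - s) y) has_real_derivative E_dot z (T - s) y) (at s)"
  unfolding E_def E_dot_def by (auto intro!: derivative_eq_intros simp: algebra_simps)

text \<open>Where the exponential branch is active, the right-hand side is at most E_dot: f decreases
  in u, and the exponentials solve the linearised equation with eigenvalues c \<mu> and L1 \<le> c \<mu>1.\<close>

lemma rhs_le_at_E:
  assumes act: "P z T x = E z T x"
  shows "rhs k f z (P z T) x \<le> E_dot z T x"
proof -
  define h where "h y = exp (- mu * (y \<bullet> xi + c * T)) * phi (y + z)" for y
  define h1 where "h1 y = exp (- mu1 * (y \<bullet> xi + c * T)) * phi1 (y + z)" for y
  have EH: "E z T y = h y + d2 * h1 y" for y by (simp add: E_def h_def h1_def)
  have ih: "integrable lborel (\<lambda>y. k (y - x) * h y)" "integrable lborel (\<lambda>y. k (y - x) * h1 y)"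
    unfolding h_def h1_def by (intro kernel_integrable_exp_profile phi_cont phi1_cont)+
  have "(LINT y|lborel. k (y - x) * P z T y) \<le> (LINT y|lborel. k (y - x) * E z T y)"
    using k_nonneg by (intro integral_mono kernel_integrable_cont P_cont_space E_cont_space mult_left_mono)
      (auto simp: P_eq_min)
  also have "\<dots> = (LINT y|lborel. k (y - x) * h y) + d2 * (LINT y|lborel. k (y - x) * h1 y)"
    unfolding EH using ih by (simp add: algebra_simps)
  finally have int: "(LINT y|lborel. k (y - x) * P z T y)
      \<le> (LINT y|lborel. k (y - x) * h y) + d2 * (LINT y|lborel. k (y - x) * h1 y)" .
  have react: "E z T x * f (x + z) (E z T x) \<le> E z T x * f (x + z) 0"
    using E_nonneg f_antimono[of 0 "E z T x"] by (intro mult_left_mono) auto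
  have "rhs k f z (P z T) x
      \<le> ((LINT y|lborel. k (y - x) * h y) - h x + f (x + z) 0 * h x)
        + d2 * ((LINT y|lborel. k (y - x) * h1 y) - h1 x + f (x + z) 0 * h1 x)"
    using int react unfolding rhs_def act EH by (simp add: algebra_simps)
  also have "\<dots> = c * mu * h x + d2 * (L1 * h1 x)"
    unfolding h_def h1_def exp_profile_eigen[OF phi_cont phi_eig] exp_profile_eigen[OF phi1_cont phi1_eig]
    by simp
  also have "\<dots> \<le> c * mu * h x + d2 * (c * mu1 * h1 x)"
    using L1_le phi1_nonneg d2_nonneg
    by (intro add_left_mono mult_left_mono mult_right_mono) (auto simp: h1_def)
  also have "\<dots> = E_dot z T x" by (simp add: E_dot_def h_def h1_def)
  finally show ?thesis .
qed

lemma rhs_le_at_uplus: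
  assumes act: "P z T x = uplus (x + z)"
  shows "rhs k f z (P z T) x \<le> 0"
proof -
  have "(LINT y|lborel. k (y - x) * P z T y) \<le> (LINT y|lborel. k (y - x) * uplus (y + z))"
    using k_nonneg
    by (intro integral_mono kernel_integrable_cont P_cont_space cont_shift[OF uplus_cont] mult_left_mono)
      (auto simp: P_eq_min)
  also have "\<dots> = (LINT y|lborel. k (y - (x + z)) * uplus y)"
    by (rule shift_int_general[OF k_cont uplus_cont])
  finally have "rhs k f z (P z T) x \<le> (LINT y|lborel. k (y - (x + z)) * uplus y) - uplus (x + z)
        + uplus (x + z) * f (x + z) (uplus (x + z))"
    unfolding rhs_def act by simp
  also have "\<dots> = 0" by (rule uplus_stat)
  finally show ?thesis .
qed

text \<open>Dini bound for -u^+_{0,z,T-s}: a maximum of -E and -u^+(\<cdot> + z), each branch controlled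
  by the two previous lemmas.\<close>

lemma P_dini: "dini_le (\<lambda>s. - P z (T - s) x) t (- rhs k f z (P z (T - t)) x)"
proof -
  have eq: "(\<lambda>s. - P z (T - s) x) = (\<lambda>s. max (- E z (T - s) x) (- uplus (x + z)))"
    unfolding P_eq_min by (rule ext) (rule minus_min_eq_max)
  show ?thesis unfolding eq
  proof (rule dini_le_max)
    assume "- uplus (x + z) \<le> - E z (T - t) x"
    then have act: "P z (T - t) x = E z (T - t) x" unfolding P_eq_min by simp
    have "((\<lambda>s. - E z (T - s) x) has_real_derivative - E_dot z (T - t) x) (at t within {t..})"
      by (rule has_field_derivative_at_within[OF DERIV_minus[OF E_time_deriv]])
    then show "dini_le (\<lambda>s. - E z (T - s) x) t (- rhs k f z (P z (T - t)) x)"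
      by (rule dini_le_mono[OF dini_le_deriv]) (use rhs_le_at_E[OF act] in simp)
  next
    assume "- E z (T - t) x \<le> - uplus (x + z)"
    then have act: "P z (T - t) x = uplus (x + z)" unfolding P_eq_min by simp
    show "dini_le (\<lambda>s. - uplus (x + z)) t (- rhs k f z (P z (T - t)) x)"
      by (rule dini_le_const) (use rhs_le_at_uplus[OF act] in simp)
  next
    show "isCont (\<lambda>s. - E z (T - s) x) t" by (rule continuous_minus[OF DERIV_isCont[OF E_time_deriv]])
    show "isCont (\<lambda>s. - uplus (x + z)) t" by (rule continuous_const)
  qed
qed

lemma P_supersolution: "dini_supersolution k f z (\<lambda>s. P z (T - s))"
proof -
  obtain B where B: "\<forall>x. uplus x \<le> B" using uplus_bdd by blast
  have "\<bar>P z (T - s) y\<bar> \<le> B" for s y using P_nonneg[of z "T - s" y] B[rule_format, of "y + z"] unfolding P_eq_min by linarith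
  moreover have "continuous_on {0..} (\<lambda>s. P z (T - s) y)" for y
    unfolding P_eq_min by (intro continuous_on_min continuous_intros DERIV_isCont[OF E_time_deriv]
        continuous_at_imp_continuous_on ballI)
  moreover have "P z (T - s) \<in> borel_measurable lborel" for s
    using borel_measurable_continuous_onI[OF P_cont_space] by simp
  ultimately show ?thesis unfolding dini_supersolution_def using P_dini by blast
qed

lemma solution_le_P:
  assumes sol: "is_solution k f z (P z T) u" and s: "s \<ge> 0"
  shows "u s x \<le> P z (T - s) x"
  using solution_le_supersolution[OF P_supersolution sol _ P_nonneg s] by simp

lemma P_solutions_antimono:
  assumes t12: "0 < t1" "t1 < t2" and t: "t > - t1"
    and sol2: "is_solution k f z (P z t2) u2" and sol1: "is_solution k f z (P z t1) u1"
  shows "u2 (t2 + t) x \<le> u1 (t1 + t) x"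
proof -
  have "u2 (t1 + t + (t2 - t1)) x \<le> u1 (t1 + t) x"
  proof (rule shifted_le_solution[OF sol2 sol1 _ P_nonneg])
    show "u2 (t2 - t1) y \<le> P z t1 y" for y using solution_le_P[OF sol2, of "t2 - t1" y] t12 by simp
  qed (use t12 t in auto)
  then show ?thesis by (simp add: add.commute)
qed

end

section \<open>The sub-solution u^-_{0,z,T}\<close>

lemma exp_difference_nonneg:
  fixes mu mu1 d1 b M sigma a a1 :: real
  assumes mu: "mu < mu1" and d1: "d1 > 0" and b: "b > 0" and a1: "a1 \<ge> 0"
    and at_M: "exp (- mu * M) * a - d1 * exp (- mu1 * M) * a1 \<ge> b"
    and ahead: "sigma \<ge> M"
  shows "exp (- mu * sigma) * a - d1 * exp (- mu1 * sigma) * a1 \<ge> 0"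
proof -
  define e where "e = exp (- mu * sigma)"
  define r where "r = exp (- (mu1 - mu) * sigma)"
  define R where "R = exp (- (mu1 - mu) * M)"
  define eM where "eM = exp (- mu * M)"
  have e1: "exp (- mu1 * sigma) = e * r" unfolding e_def r_def by (simp add: exp_add[symmetric] algebra_simps)
  have e2: "exp (- mu1 * M) = eM * R" unfolding eM_def R_def by (simp add: exp_add[symmetric] algebra_simps)
  have rR: "r \<le> R" unfolding r_def R_def using mu ahead by simp
  have epos: "e > 0" "eM > 0" unfolding e_def eM_def by simp_all
  have "eM * (a - d1 * R * a1) \<ge> b" using at_M unfolding e2 eM_def[symmetric] by (simp add: algebra_simps)
  then have br: "a - d1 * R * a1 > 0" using b epos(2) by (smt (verit) mult_le_0_iff)
  have "d1 * r * a1 \<le> d1 * R * a1" using rR d1 a1 by (intro mult_right_mono mult_left_mono) auto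
  then have "a - d1 * r * a1 \<ge> 0" using br by linarith
  then have "e * (a - d1 * r * a1) \<ge> 0" using epos by simp
  then show ?thesis unfolding e1 e_def[symmetric] by (simp add: algebra_simps)
qed

lemma exp_difference_bounded:
  fixes mu mu1 A sigma :: real
  assumes mu: "0 < mu" "mu < mu1" and A: "A > 0"
  shows "exp (- mu * sigma) - A * exp (- mu1 * sigma) \<le> exp (- mu * (ln A / (mu1 - mu)))"
proof (cases "sigma \<ge> ln A / (mu1 - mu)")
  case True
  then have "mu * (ln A / (mu1 - mu)) \<le> mu * sigma" using mu by (intro mult_left_mono) auto
  then have "exp (- mu * sigma) \<le> exp (- mu * (ln A / (mu1 - mu)))" by simp
  moreover have "A * exp (- mu1 * sigma) \<ge> 0" using A by simp
  ultimately show ?thesis by linarith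
next
  case False
  then have "(mu1 - mu) * sigma < ln A" using mu by (simp add: field_simps)
  then have "exp ((mu1 - mu) * sigma) < A" using A by (metis exp_less_cancel_iff exp_ln)
  then have scaled: "exp (- mu1 * sigma) * exp ((mu1 - mu) * sigma) < exp (- mu1 * sigma) * A"
    by (intro mult_strict_left_mono) auto
  have exp_sum: "exp (- mu1 * sigma) * exp ((mu1 - mu) * sigma) = exp (- mu * sigma)"
    by (simp add: exp_add[symmetric] algebra_simps)
  have "exp (- mu * sigma) < exp (- mu1 * sigma) * A" using scaled unfolding exp_sum .
  then have "exp (- mu * sigma) - A * exp (- mu1 * sigma) < 0" by (simp add: mult.commute)
  then show ?thesis by (smt (verit) exp_gt_zero)
qed

text \<open>Data of the sub-solution, as in the construction of u^-_{0,z,T}: the function w_{z,T}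
  is a sub-solution of (E_z) (admissibility of d1), b \<phi>0(\<cdot> + z) is a stationary sub-solution
  (admissibility of b), and w_{z,T} \<ge> b in the strip M - 2\<delta>0 \<le> x\<cdot>\<xi> + c T \<le> M.\<close>

locale front_subsolution = kernel_reaction k f \<delta>0 \<Lambda>
  for k :: "real^'n::finite \<Rightarrow> real" and f \<delta>0 \<Lambda> +
  fixes xi :: "real^'n" and c mu mu1 d1 b M :: real and phi phi1 phi0 :: "real^'n \<Rightarrow> real"
  assumes delta0_pos: "\<delta>0 > 0" and xi_unit: "norm xi = 1"
    and mu_pos: "0 < mu" and mu_less: "mu < mu1" and d1_pos: "d1 > 0" and b_pos: "b > 0"
    and phi_cont: "continuous_on UNIV phi" and phi_le1: "\<And>x. phi x \<le> 1"
    and phi1_cont: "continuous_on UNIV phi1" and phi1_lower: "\<exists>q>0. \<forall>x. phi1 x \<ge> q"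
    and phi0_cont: "continuous_on UNIV phi0" and phi0_pos: "\<And>x. phi0 x > 0" and phi0_le1: "\<And>x. phi0 x \<le> 1"
    and w_sub: "\<forall>z T t x. \<exists>D.
        ((\<lambda>s. wfun xi c mu mu1 d1 phi phi1 z (T - s) x) has_real_derivative D) (at t) \<and>
        D \<le> (LINT y|lborel. k (y - x) * wfun xi c mu mu1 d1 phi phi1 z (T - t) y)
             - wfun xi c mu mu1 d1 phi phi1 z (T - t) x
             + f (x + z) (wfun xi c mu mu1 d1 phi phi1 z (T - t) x)
               * wfun xi c mu mu1 d1 phi phi1 z (T - t) x"
    and b_sub: "\<forall>x z. (LINT y|lborel. k (y - x) * (b * phi0 (y + z))) - b * phi0 (x + z)
                   + f (x + z) (b * phi0 (x + z)) * (b * phi0 (x + z)) \<ge> 0"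
    and w_ge_b: "\<forall>z T x. M - 2 * \<delta>0 \<le> x \<bullet> xi + c * T \<and> x \<bullet> xi + c * T \<le> M
                   \<longrightarrow> wfun xi c mu mu1 d1 phi phi1 z T x \<ge> b"
begin

abbreviation W :: "real^'n \<Rightarrow> real \<Rightarrow> real^'n \<Rightarrow> real" where
  "W \<equiv> wfun xi c mu mu1 d1 phi phi1"

abbreviation U :: "real^'n \<Rightarrow> real \<Rightarrow> real^'n \<Rightarrow> real" where
  "U \<equiv> uminus0 xi c M b phi0 (wfun xi c mu mu1 d1 phi phi1)"

text \<open>Evaluating the strip condition at the point M \<xi> with the shift chosen so that x + z = q.\<close>

lemma W_at_M: "exp (- mu * M) * phi q - d1 * exp (- mu1 * M) * phi1 q \<ge> b"
proof -
  define x' where "x' = M *\<^sub>R xi"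
  have "xi \<bullet> xi = 1" using xi_unit by (simp add: dot_square_norm)
  then have front: "x' \<bullet> xi + c * 0 = M" unfolding x'_def by simp
  then have "W (q - x') 0 x' \<ge> b" using w_ge_b delta0_pos by auto
  then show ?thesis unfolding wfun_def front by simp
qed

lemma W_nonneg_ahead:
  assumes "y \<bullet> xi + c * T \<ge> M"
  shows "W z T y \<ge> 0"
proof -
  obtain q where "q > 0" "\<forall>x. phi1 x \<ge> q" using phi1_lower by blast
  then show ?thesis unfolding wfun_def
    using exp_difference_nonneg[OF mu_less d1_pos b_pos _ W_at_M assms] by (meson less_le_trans less_imp_le)
qed

lemma W_bounded: "\<exists>B. \<forall>z T y. W z T y \<le> B"
proof -
  obtain q where q: "q > 0" "\<forall>x. phi1 x \<ge> q" using phi1_lower by blast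
  define B where "B = exp (- mu * (ln (d1 * q) / (mu1 - mu)))"
  have "W z T y \<le> B" for z T y
  proof -
    define e where "e = exp (- mu * (y \<bullet> xi + c * T))"
    define e1 where "e1 = exp (- mu1 * (y \<bullet> xi + c * T))"
    have "e * phi (y + z) \<le> e" unfolding e_def using phi_le1[of "y + z"] by simp
    moreover have "d1 * e1 * q \<le> d1 * e1 * phi1 (y + z)" unfolding e1_def using q d1_pos by simp
    moreover have "e - (d1 * q) * e1 \<le> B" unfolding e_def e1_def B_def
      by (rule exp_difference_bounded[OF mu_pos mu_less]) (use d1_pos q in simp)
    ultimately show ?thesis unfolding wfun_def e_def[symmetric] e1_def[symmetric] by (simp add: algebra_simps)
  qed
  then show ?thesis by blast
qed

lemma W_le_U: "W z T y \<le> U z T y"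
  unfolding uminus0_def by simp

lemma bphi0_le_b: "b * phi0 q \<le> b"
  using phi0_le1[of q] b_pos by simp

lemma U_nonneg: "U z T y \<ge> 0"
proof -
  have "b * phi0 (y + z) > 0" using b_pos phi0_pos[of "y + z"] by simp
  then show ?thesis using W_nonneg_ahead[of y T z] unfolding uminus0_def by (auto simp: max_def)
qed

lemma U_bounded: "\<exists>B. \<forall>z T y. \<bar>U z T y\<bar> \<le> B"
proof -
  obtain B where B: "\<forall>z T y. W z T y \<le> B" using W_bounded by blast
  have "\<bar>U z T y\<bar> \<le> max b B" for z T y
    using U_nonneg[of z T y] bphi0_le_b[of "y + z"] B[rule_format, of z T y] unfolding uminus0_def by auto
  then show ?thesis by blast
qed

text \<open>In the strip and ahead of it, u^-_{0,z,T} coincides with w_{z,T} (there w \<ge> b \<ge> b \<phi>0) \<dots>\<close>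

lemma U_eq_W:
  assumes "M - 2 * \<delta>0 \<le> y \<bullet> xi + c * T"
  shows "U z T y = W z T y"
proof (cases "y \<bullet> xi + c * T < M")
  case True
  then have "W z T y \<ge> b" using w_ge_b assms by simp
  then show ?thesis unfolding uminus0_def using True bphi0_le_b[of "y + z"] by simp
qed (simp add: uminus0_def)

lemma U_cases:
  "U z T y = (if y \<bullet> xi + c * T \<le> M - \<delta>0 then max (b * phi0 (y + z)) (W z T y) else W z T y)"
  using U_eq_W[of y T z] delta0_pos by (auto simp: uminus0_def)

text \<open>Regularity of w_{z,T} and u^-_{0,z,T}: continuity in space and time, measurability; at the
  switching level M - \<delta>0 both branches agree.\<close>

lemma W_cont_space: "continuous_on UNIV (W z T)"
  unfolding wfun_def
  by (intro continuous_on_diff continuous_on_mult[OF _ cont_shift[OF phi_cont]]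
      continuous_on_mult[OF _ cont_shift[OF phi1_cont]] continuous_intros)

lemma W_cont_time: "continuous_on UNIV (\<lambda>s. W z (T - s) y)"
  unfolding wfun_def by (intro continuous_intros)

lemma U_cont_time: "continuous_on UNIV (\<lambda>s. U z (T - s) y)"
proof -
  have "continuous_on UNIV (\<lambda>s. if y \<bullet> xi + c * (T - s) \<le> M - \<delta>0
          then max (b * phi0 (y + z)) (W z (T - s) y) else W z (T - s) y)"
  proof (rule continuous_on_cases_le)
    show "continuous_on {s \<in> UNIV. y \<bullet> xi + c * (T - s) \<le> M - \<delta>0} (\<lambda>s. max (b * phi0 (y + z)) (W z (T - s) y))"
      by (intro continuous_on_max continuous_on_const continuous_on_subset[OF W_cont_time]) simp
    show "continuous_on {s \<in> UNIV. M - \<delta>0 \<le> y \<bullet> xi + c * (T - s)} (\<lambda>s. W z (T - s) y)"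
      by (rule continuous_on_subset[OF W_cont_time]) simp
    show "continuous_on UNIV (\<lambda>s. y \<bullet> xi + c * (T - s))" by (intro continuous_intros)
    fix s assume "y \<bullet> xi + c * (T - s) = M - \<delta>0"
    then have "W z (T - s) y \<ge> b" using w_ge_b delta0_pos by simp
    then show "max (b * phi0 (y + z)) (W z (T - s) y) = W z (T - s) y" using bphi0_le_b[of "y + z"] by simp
  qed
  then show ?thesis unfolding U_cases .
qed

lemma U_measurable: "U z T \<in> borel_measurable lborel"
proof -
  have "continuous_on UNIV (\<lambda>y. max (b * phi0 (y + z)) (W z T y))"
    by (intro continuous_on_max continuous_on_mult continuous_on_const cont_shift[OF phi0_cont] W_cont_space)
  then have "(\<lambda>y. max (b * phi0 (y + z)) (W z T y)) \<in> borel_measurable lborel"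
    using borel_measurable_continuous_onI by simp
  moreover have "W z T \<in> borel_measurable lborel"
    using borel_measurable_continuous_onI[OF W_cont_space] by simp
  moreover have "{y \<in> space lborel. y \<bullet> xi + c * T < M} \<in> sets lborel"
    using open_Collect_less[of "\<lambda>y. y \<bullet> xi + c * T" "\<lambda>_. M"] by (simp add: continuous_intros)
  ultimately have "(\<lambda>y. if y \<bullet> xi + c * T < M then max (b * phi0 (y + z)) (W z T y) else W z T y)
      \<in> borel_measurable lborel" by (rule measurable_If)
  then show ?thesis unfolding uminus0_def .
qed

text \<open>Behind the strip, the kernel only sees points y with y\<cdot>\<xi> + c T < M, where u^- \<ge> b \<phi>0.\<close>

lemma U_ge_bphi0_near:
  assumes front: "x \<bullet> xi + c * T \<le> M - \<delta>0" and k0: "k (y - x) \<noteq> 0"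
  shows "b * phi0 (y + z) \<le> U z T y"
proof -
  have "norm (y - x) < \<delta>0" using k0 k_supp by (meson not_le)
  moreover have "(y - x) \<bullet> xi \<le> norm (y - x) * norm xi" by (rule norm_cauchy_schwarz)
  ultimately have "(y - x) \<bullet> xi < \<delta>0" using xi_unit by simp
  moreover have "y \<bullet> xi + c * T = (x \<bullet> xi + c * T) + (y - x) \<bullet> xi" by (simp add: inner_diff_left)
  ultimately have "y \<bullet> xi + c * T < M" using front by simp
  then show ?thesis unfolding uminus0_def by simp
qed

text \<open>On the w-branch the Dini derivative is bounded by the right-hand side, since w is a
  sub-solution and u^- \<ge> w under the integral.\<close>

lemma dini_W_branch:
  assumes act: "U z (T - t) x = W z (T - t) x"
  shows "dini_le (\<lambda>s. W z (T - s) x) t (rhs k f z (U z (T - t)) x)"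
proof -
  obtain D where D: "((\<lambda>s. W z (T - s) x) has_real_derivative D) (at t)"
      "D \<le> (LINT y|lborel. k (y - x) * W z (T - t) y) - W z (T - t) x + f (x + z) (W z (T - t) x) * W z (T - t) x"
    using w_sub by blast
  obtain B where B: "\<forall>z T y. \<bar>U z T y\<bar> \<le> B" using U_bounded by blast
  have "(LINT y|lborel. k (y - x) * W z (T - t) y) \<le> (LINT y|lborel. k (y - x) * U z (T - t) y)"
    using B k_nonneg W_le_U
    by (intro integral_mono kernel_integrable_cont W_cont_space kernel_integrable_bdd U_measurable
        mult_left_mono) auto
  then have "D \<le> rhs k f z (U z (T - t)) x" using D(2) unfolding rhs_def act by (simp add: mult.commute)
  then show ?thesis by (rule dini_le_mono[OF dini_le_deriv[OF has_field_derivative_at_within[OF D(1)]]])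
qed

lemma rhs_nonneg_bphi0_branch:
  assumes act: "U z T x = b * phi0 (x + z)" and front: "x \<bullet> xi + c * T \<le> M - \<delta>0"
  shows "0 \<le> rhs k f z (U z T) x"
proof -
  obtain B where B: "\<forall>z T y. \<bar>U z T y\<bar> \<le> B" using U_bounded by blast
  have "k (y - x) * (b * phi0 (y + z)) \<le> k (y - x) * U z T y" for y
    using U_ge_bphi0_near[OF front, of y z] k_nonneg[of "y - x"] by (cases "k (y - x) = 0") auto
  then have "(LINT y|lborel. k (y - x) * (b * phi0 (y + z))) \<le> (LINT y|lborel. k (y - x) * U z T y)"
    using B by (intro integral_mono kernel_integrable_cont continuous_on_mult continuous_on_const
        cont_shift[OF phi0_cont] kernel_integrable_bdd U_measurable) auto
  moreover have "(LINT y|lborel. k (y - x) * (b * phi0 (y + z))) - b * phi0 (x + z)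
                   + f (x + z) (b * phi0 (x + z)) * (b * phi0 (x + z)) \<ge> 0" using b_sub by blast
  ultimately show ?thesis unfolding rhs_def act by (simp add: mult.commute)
qed

lemma front_slow: "\<exists>dl>0. \<forall>s. t \<le> s \<and> s < t + dl \<longrightarrow> \<bar>c * (T - s) - c * (T - t)\<bar> < \<delta>0"
proof (intro exI[of _ "\<delta>0 / (\<bar>c\<bar> + 1)"] conjI allI impI)
  show "\<delta>0 / (\<bar>c\<bar> + 1) > 0" using delta0_pos by simp
  fix s assume s: "t \<le> s \<and> s < t + \<delta>0 / (\<bar>c\<bar> + 1)"
  have "c * (T - s) - c * (T - t) = - c * (s - t)" by (simp add: algebra_simps)
  then have "\<bar>c * (T - s) - c * (T - t)\<bar> = \<bar>c\<bar> * (s - t)" using s by (simp add: abs_mult)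
  also have "\<dots> \<le> \<bar>c\<bar> * (\<delta>0 / (\<bar>c\<bar> + 1))" using s by (intro mult_left_mono) auto
  also have "\<dots> < \<delta>0" using delta0_pos by (simp add: field_simps)
  finally show "\<bar>c * (T - s) - c * (T - t)\<bar> < \<delta>0" .
qed

text \<open>Dini bound for u^-_{0,z,T-s}: near or ahead of the strip it coincides with the w-branch,
  behind it it is the maximum of a constant (in time) sub-solution and the w-branch.\<close>

lemma U_dini: "dini_le (\<lambda>s. U z (T - s) x) t (rhs k f z (U z (T - t)) x)"
proof -
  obtain dl where dl: "dl > 0" "\<forall>s. t \<le> s \<and> s < t + dl \<longrightarrow> \<bar>c * (T - s) - c * (T - t)\<bar> < \<delta>0"
    using front_slow by blast
  show ?thesis
  proof (cases "x \<bullet> xi + c * (T - t) > M - \<delta>0")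
    case True
    have act: "U z (T - t) x = W z (T - t) x" using U_eq_W True delta0_pos by simp
    show ?thesis
    proof (rule dini_le_cong[OF dini_W_branch[OF act] dl(1)])
      fix s assume "t \<le> s" "s < t + dl"
      then have "M - 2 * \<delta>0 \<le> x \<bullet> xi + c * (T - s)" using dl(2) True by (auto simp: abs_less_iff)
      then show "U z (T - s) x = W z (T - s) x" by (rule U_eq_W)
    qed
  next
    case False
    then have front: "x \<bullet> xi + c * (T - t) \<le> M - \<delta>0" by simp
    have "dini_le (\<lambda>s. max ((\<lambda>s. b * phi0 (x + z)) s) ((\<lambda>s. W z (T - s) x) s)) t (rhs k f z (U z (T - t)) x)"
    proof (rule dini_le_max)
      assume "W z (T - t) x \<le> b * phi0 (x + z)"
      then have "U z (T - t) x = b * phi0 (x + z)" unfolding U_cases using front by simp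
      then show "dini_le (\<lambda>s. b * phi0 (x + z)) t (rhs k f z (U z (T - t)) x)"
        by (intro dini_le_const rhs_nonneg_bphi0_branch front)
    next
      assume "b * phi0 (x + z) \<le> W z (T - t) x"
      then have "U z (T - t) x = W z (T - t) x" unfolding U_cases using front by simp
      then show "dini_le (\<lambda>s. W z (T - s) x) t (rhs k f z (U z (T - t)) x)" by (rule dini_W_branch)
    next
      show "isCont (\<lambda>s. b * phi0 (x + z)) t" by (rule continuous_const)
      show "isCont (\<lambda>s. W z (T - s) x) t"
        using W_cont_time continuous_on_eq_continuous_at[OF open_UNIV] by blast
    qed
    then show ?thesis
    proof (rule dini_le_cong[OF _ dl(1)])
      fix s assume "t \<le> s" "s < t + dl"
      then have "x \<bullet> xi + c * (T - s) < M" using dl(2) front by (auto simp: abs_less_iff)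
      then show "U z (T - s) x = max (b * phi0 (x + z)) (W z (T - s) x)" unfolding uminus0_def by simp
    qed
  qed
qed

lemma U_subsolution: "dini_subsolution k f z (\<lambda>s. U z (T - s))"
  unfolding dini_subsolution_def
  using U_bounded U_measurable U_dini continuous_on_subset[OF U_cont_time] by blast

lemma U_le_solution:
  assumes sol: "is_solution k f z (U z T) u" and s: "s \<ge> 0"
  shows "U z (T - s) x \<le> u s x"
  using subsolution_le_solution[OF U_subsolution sol _ U_nonneg s] by simp

lemma U_solutions_mono:
  assumes t12: "0 < t1" "t1 < t2" and t: "t > - t1"
    and sol2: "is_solution k f z (U z t2) u2" and sol1: "is_solution k f z (U z t1) u1"
  shows "u1 (t1 + t) x \<le> u2 (t2 + t) x"
proof -
  have "u1 (t1 + t) x \<le> u2 (t1 + t + (t2 - t1)) x"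
  proof (rule solution_le_shifted[OF sol1 sol2 _ U_nonneg])
    show "U z t1 y \<le> u2 (t2 - t1) y" for y using U_le_solution[OF sol2, of "t2 - t1" y] t12 by simp
  qed (use t12 t in auto)
  then show ?thesis by (simp add: add.commute)
qed

end

section \<open>From the hypotheses (H1)-(H4) to the abstract setting\<close>

text \<open>A positive principal eigenfunction \<phi>0 of K - I + a_0 I with eigenvalue L bounds the
  linear growth rate: a_0 \<le> L + 1, because the kernel term is non-negative.\<close>

lemma growth_rate_le_eigenvalue:
  assumes k_nonneg: "\<And>y. k y \<ge> 0" and phi0_pos: "\<And>x. phi0 x > 0"
    and eig: "Lop k xi 0 a0 (\<lambda>x. complex_of_real (phi0 x))
                  = (\<lambda>x. complex_of_real L * complex_of_real (phi0 x))"
  shows "a0 x \<le> L + 1"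
proof -
  have e: "(LINT y|lborel. exp (- 0 * ((y - x) \<bullet> xi)) * k (y - x) * phi0 y) - phi0 x + a0 x * phi0 x
      = L * phi0 x"
    by (rule eig_real[OF eig])
  have "(LINT y|lborel. exp (- 0 * ((y - x) \<bullet> xi)) * k (y - x) * phi0 y) \<ge> 0"
    using k_nonneg phi0_pos by (intro integral_nonneg_AE AE_I2) (simp add: less_imp_le)
  then have "a0 x * phi0 x \<le> (L + 1) * phi0 x" using e by (simp add: algebra_simps)
  then show ?thesis using phi0_pos[of x] by simp
qed

lemma kernel_reaction_from_hypotheses:
  fixes k :: "real^'n::finite \<Rightarrow> real" and f :: "real^'n \<Rightarrow> real \<Rightarrow> real"
  assumes k_C1: "\<exists>D :: real^'n \<Rightarrow> ((real^'n) \<Rightarrow>\<^sub>L real).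
                 (\<forall>x. (k has_derivative blinfun_apply (D x)) (at x)) \<and> continuous_on UNIV D"
    and k_pos: "\<forall>z. norm z < delta0 \<longrightarrow> k z > 0"
    and k_zero: "\<forall>z. norm z \<ge> delta0 \<longrightarrow> k z = 0"
    and k_int: "(LINT z|lborel. k z) = 1"
    and H1_C1: "\<exists>D :: ((real^'n) \<times> real) \<Rightarrow> (((real^'n) \<times> real) \<Rightarrow>\<^sub>L real).
                 (\<forall>q \<in> UNIV \<times> {0..}. ((\<lambda>(x, u). f x u) has_derivative blinfun_apply (D q))
                     (at q within UNIV \<times> {0..})) \<and> continuous_on (UNIV \<times> {0..}) D"
    and H1_mono: "\<exists>\<epsilon>>0. \<forall>x u D. u \<ge> 0 \<longrightarrow>
                   ((\<lambda>v. f x v) has_real_derivative D) (at u within {0..}) \<longrightarrow> D \<le> - \<epsilon>"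
    and H4: "\<forall>x u. u \<le> 0 \<longrightarrow> f x u = f x 0"
    and phi0_pos: "\<forall>x. phi0 x > 0"
    and phi0_eig: "Lop k xi 0 (\<lambda>x. f x 0) (\<lambda>x. complex_of_real (phi0 x))
                  = (\<lambda>x. complex_of_real (lambda0 p k xi 0 (\<lambda>x. f x 0)) * complex_of_real (phi0 x))"
  shows "kernel_reaction k f delta0 (lambda0 p k xi 0 (\<lambda>x. f x 0) + 1)"
proof unfold_locales
  show "continuous_on UNIV k"
  proof -
    obtain D :: "real^'n \<Rightarrow> ((real^'n) \<Rightarrow>\<^sub>L real)" where "\<forall>x. (k has_derivative blinfun_apply (D x)) (at x)"
      using k_C1 by blast
    then have "isCont k x" for x using has_derivative_continuous by blast
    then show ?thesis by (simp add: continuous_at_imp_continuous_on)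
  qed
  show k_nonneg: "0 \<le> k y" for y using k_pos k_zero by (cases "norm y < delta0") (auto simp: less_imp_le)
  show "delta0 \<le> norm y \<Longrightarrow> k y = 0" for y using k_zero by simp
  show "(LINT y|lborel. k y) = 1" by (rule k_int)
  show antimono: "0 \<le> a \<Longrightarrow> a \<le> b \<Longrightarrow> f x b \<le> f x a" for x a b by (rule f_antimono_H1[OF H1_C1 H1_mono])
  show "w \<le> 0 \<Longrightarrow> f x w = f x 0" for x w using H4 by blast
  have f0: "f x 0 \<le> lambda0 p k xi 0 (\<lambda>x. f x 0) + 1" for x
    by (rule growth_rate_le_eigenvalue[OF k_nonneg _ phi0_eig]) (use phi0_pos in auto)
  show "f x w \<le> lambda0 p k xi 0 (\<lambda>x. f x 0) + 1" for x w
  proof (cases "w \<ge> 0")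
    case True
    then show ?thesis using antimono[of 0 w x] f0[of x] by simp
  next
    case False
    then have "f x w = f x 0" using H4 by (meson less_imp_le not_le)
    then show ?thesis using f0[of x] by simp
  qed
qed

text \<open>The data of the construction of u^-_{0,z,T} satisfy the assumptions of the sub-solution
  locale; \<phi>1 is bounded below by a positive constant, being continuous, periodic and positive.\<close>

lemma front_subsolution_from_hypotheses:
  fixes k :: "real^'n::finite \<Rightarrow> real"
  assumes KR: "kernel_reaction k f delta0 \<Lambda>"
    and p_pos: "\<forall>i. p i > 0" and delta0_pos: "delta0 > 0" and xi_unit: "norm xi = 1"
    and mu: "0 < mu" "mu < mu1" and d1_pos: "d1 > 0" and b_pos: "b > 0"
    and phi_Xp: "phi \<in> Xp_real p" and phi_sup: "(SUP x. phi x) = 1"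
    and phi1_Xp: "phi1 \<in> Xp_real p" and phi1_pos: "\<forall>x. phi1 x > 0"
    and phi0_Xp: "phi0 \<in> Xp_real p" and phi0_pos: "\<forall>x. phi0 x > 0" and phi0_sup: "(SUP x. phi0 x) = 1"
    and d1_sub: "\<forall>z T t x. \<exists>D.
        ((\<lambda>s. wfun xi c mu mu1 d1 phi phi1 z (T - s) x) has_real_derivative D) (at t) \<and>
        D \<le> (LINT y|lborel. k (y - x) * wfun xi c mu mu1 d1 phi phi1 z (T - t) y)
             - wfun xi c mu mu1 d1 phi phi1 z (T - t) x
             + f (x + z) (wfun xi c mu mu1 d1 phi phi1 z (T - t) x)
               * wfun xi c mu mu1 d1 phi phi1 z (T - t) x"
    and b_sub: "\<forall>x z. (LINT y|lborel. k (y - x) * (b * phi0 (y + z))) - b * phi0 (x + z)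
                   + f (x + z) (b * phi0 (x + z)) * (b * phi0 (x + z)) \<ge> 0"
    and M_prop: "\<forall>z T x. M - 2 * delta0 \<le> x \<bullet> xi + c * T \<and> x \<bullet> xi + c * T \<le> M
                   \<longrightarrow> wfun xi c mu mu1 d1 phi phi1 z T x \<ge> b"
  shows "front_subsolution k f delta0 \<Lambda> xi c mu mu1 d1 b M phi phi1 phi0"
proof (intro front_subsolution.intro[OF KR] front_subsolution_axioms.intro)
  obtain x1 where "\<forall>x. phi1 x1 \<le> phi1 x" using per_min[OF phi1_Xp p_pos] by blast
  then show "\<exists>q>0. \<forall>x. q \<le> phi1 x" using phi1_pos by blast
  show "phi x \<le> 1" "phi0 x \<le> 1" for x
    by (rule per_le_sup[OF phi_Xp p_pos phi_sup], rule per_le_sup[OF phi0_Xp p_pos phi0_sup])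
  show "continuous_on UNIV phi" "continuous_on UNIV phi1" "continuous_on UNIV phi0"
    using phi_Xp phi1_Xp phi0_Xp by (simp_all add: Xp_real_def)
qed (fact delta0_pos xi_unit mu d1_pos b_pos d1_sub b_sub M_prop phi0_pos[rule_format])+

text \<open>Likewise for u^+_{0,z,T}: the eigenvalue of \<phi> is c \<mu> by the choice of \<mu>, that of \<phi>1 is
  at most c \<mu>1 by the choice of \<mu>1, and u^+ is bounded by periodicity.\<close>

lemma front_supersolution_from_hypotheses:
  fixes k :: "real^'n::finite \<Rightarrow> real"
  assumes KR: "kernel_reaction k f delta0 \<Lambda>" and p_pos: "\<forall>i. p i > 0" and mu1_pos: "mu1 > 0"
    and phi_Xp: "phi \<in> Xp_real p" and phi_pos: "\<forall>x. phi x > 0"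
    and mu_eq: "lambda0 p k xi mu (\<lambda>x. f x 0) = c * mu"
    and phi_eig: "Lop k xi mu (\<lambda>x. f x 0) (\<lambda>x. complex_of_real (phi x))
                  = (\<lambda>x. complex_of_real (lambda0 p k xi mu (\<lambda>x. f x 0)) * complex_of_real (phi x))"
    and phi1_Xp: "phi1 \<in> Xp_real p" and phi1_pos: "\<forall>x. phi1 x > 0"
    and mu1_speed: "lambda0 p k xi mu1 (\<lambda>x. f x 0) / mu1 < c"
    and phi1_eig: "Lop k xi mu1 (\<lambda>x. f x 0) (\<lambda>x. complex_of_real (phi1 x))
                  = (\<lambda>x. complex_of_real (lambda0 p k xi mu1 (\<lambda>x. f x 0)) * complex_of_real (phi1 x))"
    and uplus_Xp: "uplus \<in> Xp_real p" and uplus_nonneg: "\<forall>x. uplus x \<ge> 0"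
    and uplus_stat: "\<forall>x. (LINT y|lborel. k (y - x) * uplus y) - uplus x + uplus x * f x (uplus x) = 0"
    and d2_nonneg: "d2 \<ge> 0"
  shows "front_supersolution k f delta0 \<Lambda> xi c mu mu1 d2 (lambda0 p k xi mu1 (\<lambda>x. f x 0)) phi phi1 uplus"
proof (intro front_supersolution.intro[OF KR] front_supersolution_axioms.intro)
  show "(LINT y|lborel. exp (- mu * ((y - x) \<bullet> xi)) * k (y - x) * phi y) - phi x + f x 0 * phi x
      = c * mu * phi x" for x using eig_real[OF phi_eig, of x] mu_eq by simp
  show "(LINT y|lborel. exp (- mu1 * ((y - x) \<bullet> xi)) * k (y - x) * phi1 y) - phi1 x + f x 0 * phi1 x
      = lambda0 p k xi mu1 (\<lambda>x. f x 0) * phi1 x" for x by (rule eig_real[OF phi1_eig])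
  show "lambda0 p k xi mu1 (\<lambda>x. f x 0) \<le> c * mu1"
    using mu1_speed mu1_pos by (simp add: divide_less_eq less_imp_le)
  show "\<exists>B. \<forall>x. uplus x \<le> B" using per_bounded[OF uplus_Xp p_pos] abs_le_D1 by blast
  show "0 \<le> phi x" "0 \<le> phi1 x" for x using phi_pos phi1_pos by (simp_all add: less_imp_le)
  show "continuous_on UNIV phi" "continuous_on UNIV phi1" "continuous_on UNIV uplus"
    using phi_Xp phi1_Xp uplus_Xp by (simp_all add: Xp_real_def)
qed (fact d2_nonneg uplus_nonneg[rule_format] uplus_stat[rule_format])+

theorem proposition3p6:
  fixes k :: "real^'n::finite \<Rightarrow> real"
    and f :: "real^'n \<Rightarrow> real \<Rightarrow> real"
    and p :: "'n \<Rightarrow> real"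
    and delta0 :: real
    and xi :: "real^'n"
    and c mu mu1 mu_star cstar d1 b M d2 :: real
    and phi phi1 phi0 uplus :: "real^'n \<Rightarrow> real"
  assumes p_pos: "\<forall>i. p i > 0"
    and k_C1: "\<exists>D :: real^'n \<Rightarrow> ((real^'n) \<Rightarrow>\<^sub>L real).
                 (\<forall>x. (k has_derivative blinfun_apply (D x)) (at x)) \<and> continuous_on UNIV D"
    and delta0_pos: "delta0 > 0"
    and k_pos: "\<forall>z. norm z < delta0 \<longrightarrow> k z > 0"
    and k_zero: "\<forall>z. norm z \<ge> delta0 \<longrightarrow> k z = 0"
    and k_int: "(LINT z|lborel. k z) = 1"
    and f_per: "\<forall>x u i. f (x + p i *\<^sub>R axis i 1) u = f x u"
    and H1_C1: "\<exists>D :: ((real^'n) \<times> real) \<Rightarrow> (((real^'n) \<times> real) \<Rightarrow>\<^sub>L real).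
                 (\<forall>q \<in> UNIV \<times> {0..}. ((\<lambda>(x, u). f x u) has_derivative blinfun_apply (D q))
                     (at q within UNIV \<times> {0..})) \<and> continuous_on (UNIV \<times> {0..}) D"
    and H1_mono: "\<exists>\<epsilon>>0. \<forall>x u D. u \<ge> 0 \<longrightarrow>
                   ((\<lambda>v. f x v) has_real_derivative D) (at u within {0..}) \<longrightarrow> D \<le> - \<epsilon>"
    and H1_neg: "\<exists>U. \<forall>x u. u \<ge> U \<longrightarrow> f x u < 0"
    and H2: "lambda0 p k xi 0 (\<lambda>x. f x 0) > 0"
    and H3: "\<forall>xi'. norm xi' = 1 \<longrightarrow> (\<forall>m\<ge>0.
               principal_eigenvalue p (Lop k xi' m (\<lambda>x. f x 0)) (lambda0 p k xi' m (\<lambda>x. f x 0)))"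
    and H4: "\<forall>x u. u \<le> 0 \<longrightarrow> f x u = f x 0"
    and uplus_Xp: "uplus \<in> Xp_real p"
    and uplus_nonneg: "\<forall>x. uplus x \<ge> 0"
    and uplus_nonzero: "\<exists>x. uplus x \<noteq> 0"
    and uplus_stat: "\<forall>x. (LINT y|lborel. k (y - x) * uplus y) - uplus x + uplus x * f x (uplus x) = 0"
    and xi_unit: "norm xi = 1"
    and mu_star_pos: "mu_star > 0"
    and cstar_def: "cstar = Inf {lambda0 p k xi m (\<lambda>x. f x 0) / m | m. m > 0}"
    and cstar_attained: "cstar = lambda0 p k xi mu_star (\<lambda>x. f x 0) / mu_star"
    and cstar_strict: "\<forall>m. 0 < m \<and> m < mu_star \<longrightarrow> cstar < lambda0 p k xi m (\<lambda>x. f x 0) / m"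
    and c_gt: "c > cstar"
    and mu_range: "0 < mu" "mu < mu_star"
    and mu_eq: "lambda0 p k xi mu (\<lambda>x. f x 0) = c * mu"
    and mu1_range: "mu < mu1" "mu1 < min (2 * mu) mu_star"
    and mu1_speed: "cstar < lambda0 p k xi mu1 (\<lambda>x. f x 0) / mu1"
                   "lambda0 p k xi mu1 (\<lambda>x. f x 0) / mu1 < c"
    and phi_Xp: "phi \<in> Xp_real p" and phi_pos: "\<forall>x. phi x > 0" and phi_sup: "(SUP x. phi x) = 1"
    and phi_eig: "Lop k xi mu (\<lambda>x. f x 0) (\<lambda>x. complex_of_real (phi x))
                  = (\<lambda>x. complex_of_real (lambda0 p k xi mu (\<lambda>x. f x 0)) * complex_of_real (phi x))"
    and phi1_Xp: "phi1 \<in> Xp_real p" and phi1_pos: "\<forall>x. phi1 x > 0" and phi1_sup: "(SUP x. phi1 x) = 1"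
    and phi1_eig: "Lop k xi mu1 (\<lambda>x. f x 0) (\<lambda>x. complex_of_real (phi1 x))
                  = (\<lambda>x. complex_of_real (lambda0 p k xi mu1 (\<lambda>x. f x 0)) * complex_of_real (phi1 x))"
    and phi0_Xp: "phi0 \<in> Xp_real p" and phi0_pos: "\<forall>x. phi0 x > 0" and phi0_sup: "(SUP x. phi0 x) = 1"
    and phi0_eig: "Lop k xi 0 (\<lambda>x. f x 0) (\<lambda>x. complex_of_real (phi0 x))
                  = (\<lambda>x. complex_of_real (lambda0 p k xi 0 (\<lambda>x. f x 0)) * complex_of_real (phi0 x))"
    and d1_pos: "d1 > 0"
    and d1_sub: "\<forall>z T t x. \<exists>D.
        ((\<lambda>s. wfun xi c mu mu1 d1 phi phi1 z (T - s) x) has_real_derivative D) (at t) \<and>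
        D \<le> (LINT y|lborel. k (y - x) * wfun xi c mu mu1 d1 phi phi1 z (T - t) y)
             - wfun xi c mu mu1 d1 phi phi1 z (T - t) x
             + f (x + z) (wfun xi c mu mu1 d1 phi phi1 z (T - t) x)
               * wfun xi c mu mu1 d1 phi phi1 z (T - t) x"
    and b_pos: "b > 0"
    and b_sub: "\<forall>x z. (LINT y|lborel. k (y - x) * (b * phi0 (y + z))) - b * phi0 (x + z)
                   + f (x + z) (b * phi0 (x + z)) * (b * phi0 (x + z)) \<ge> 0"
    and M_pos: "M > 0"
    and M_prop: "\<forall>z T x. M - 2 * delta0 \<le> x \<bullet> xi + c * T \<and> x \<bullet> xi + c * T \<le> M
                   \<longrightarrow> wfun xi c mu mu1 d1 phi phi1 z T x \<ge> b"
    and d2_nonneg: "d2 \<ge> 0"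
  shows "\<forall>z t1 t2. 0 < t1 \<and> t1 < t2 \<longrightarrow>
     (\<forall>u1 u2. is_solution k f z (uminus0 xi c M b phi0 (wfun xi c mu mu1 d1 phi phi1) z t2) u2 \<and>
              is_solution k f z (uminus0 xi c M b phi0 (wfun xi c mu mu1 d1 phi phi1) z t1) u1 \<longrightarrow>
         (\<forall>t x. t > - t1 \<longrightarrow> u2 (t2 + t) x \<ge> u1 (t1 + t) x)) \<and>
     (\<forall>u1 u2. is_solution k f z (uplus0 xi c mu mu1 d2 phi phi1 uplus z t2) u2 \<and>
              is_solution k f z (uplus0 xi c mu mu1 d2 phi phi1 uplus z t1) u1 \<longrightarrow>
         (\<forall>t x. t > - t1 \<longrightarrow> u2 (t2 + t) x \<le> u1 (t1 + t) x))"
proof -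
  let ?\<Lambda> = "lambda0 p k xi 0 (\<lambda>x. f x 0) + 1"
  have KR: "kernel_reaction k f delta0 ?\<Lambda>"
    by (rule kernel_reaction_from_hypotheses[OF k_C1 k_pos k_zero k_int H1_C1 H1_mono H4 phi0_pos phi0_eig])
  interpret sub: front_subsolution k f delta0 ?\<Lambda> xi c mu mu1 d1 b M phi phi1 phi0
    by (rule front_subsolution_from_hypotheses[OF KR p_pos delta0_pos xi_unit mu_range(1) mu1_range(1)
          d1_pos b_pos phi_Xp phi_sup phi1_Xp phi1_pos phi0_Xp phi0_pos phi0_sup d1_sub b_sub M_prop])
  interpret sup: front_supersolution k f delta0 ?\<Lambda> xi c mu mu1 d2 "lambda0 p k xi mu1 (\<lambda>x. f x 0)"
      phi phi1 uplus
    by (rule front_supersolution_from_hypotheses[OF KR p_pos _ phi_Xp phi_pos mu_eq phi_eig phi1_Xp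
          phi1_pos mu1_speed(2) phi1_eig uplus_Xp uplus_nonneg uplus_stat d2_nonneg])
      (use mu_range mu1_range in simp)
  show ?thesis
  proof (intro allI impI conjI; elim conjE)
    fix z x :: "real^'n" and t1 t2 t :: real and u1 u2 :: "real \<Rightarrow> real^'n \<Rightarrow> real"
    assume "0 < t1" "t1 < t2" "t > - t1"
    show "u1 (t1 + t) x \<le> u2 (t2 + t) x"
      if "is_solution k f z (sub.U z t2) u2" "is_solution k f z (sub.U z t1) u1"
      by (rule sub.U_solutions_mono[OF \<open>0 < t1\<close> \<open>t1 < t2\<close> \<open>t > - t1\<close> that])
    show "u2 (t2 + t) x \<le> u1 (t1 + t) x"
      if "is_solution k f z (sup.P z t2) u2" "is_solution k f z (sup.P z t1) u1"
      by (rule sup.P_solutions_antimono[OF \<open>0 < t1\<close> \<open>t1 < t2\<close> \<open>t > - t1\<close> that])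
  qed
qed

end
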